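(* Under the hypotheses of Theorem 1 (walk $\{S_n\}$, stationary scenery $\{\xi(k)\}$ independent of the walk, $n\mathbb{P}(\xi(0)>u_n)\to\tau\ge0$, conditions $D(u_n)$ and $D'(u_n)$ with sequences $(\alpha_{n,l})$, $(l_n)$, $(k_n)$), and with the blocks $B_j$ and $K_n$ defined in the context, for almost every realization of $\{S_n,n\in\mathbb{N}_+\}$, $$\prod_{j\le K_n}\mathbb{P}(M_{B_j}\le u_n)\xrightarrow[n\to\infty]{}e^{-\tau q},$$ where $q=\mathbb{P}(\forall k\in\mathbb{N}_+,\ S_k\ne0)$ and the probabilities are with respect to the scenery, with the realization of the walk fixed.
   Context: Setting: $\{X_k\}$ centered integer-valued i.i.d., in the domain of attraction of an $\alpha$-stable law with $\alpha\in(0,1)$, $S_n=X_1+\cdots+X_n$; $\{\xi(k),k\in\mathbb{Z}\}$ stationary real random variables independent of $\{X_k\}$; $n\mathbb{P}(\xi(0)>u_n)\to\tau\ge0$. Condition $D(u_n)$: with $F_{i_1,\ldots,i_p}(u)=\mathbb{P}(\xi(i_1)\le u,\ldots,\xi(i_p)\le u)$, there exist $(\alpha_{n,l})_{(n,l)\in\mathbb{N}^2}$ and positive integers $(l_n)$ with $\alpha_{n,l_n}\to0$, $l_n=o(n)$, such that $|F_{i_1,\ldots,i_p,j_1,\ldots,j_{p'}}(u_n)-F_{i_1,\ldots,i_p}(u_n)F_{j_1,\ldots,j_{p'}}(u_n)|\le\alpha_{n,l}$ whenever $i_1<\cdots<i_p<j_1<\cdots<j_{p'}$ and $j_1-i_p\ge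 l$, uniformly in $p,p'$. Condition $D'(u_n)$: there exist integers $(k_n)$ with $k_n\to\infty$, $\frac{n^2}{k_n}\alpha_{n,l_n}\to0$, $k_nl_n=o(n)$, and $n\sum_{j=1}^{\lfloor n/k_n\rfloor}\mathbb{P}(\xi(0)>u_n,\xi(j)>u_n)\to0$. Notation: for $B\subset\mathbb{Z}$, $M_B=\max_{k\in B}\xi(k)$ (with $M_\emptyset=-\infty$). For a fixed realization of the walk, $\mathcal{S}_n=\{S_1,\ldots,S_n\}$, $R_n=\#\mathcal{S}_n$, $r_n=\lfloor n/(k_n-1)\rfloor+1$, $K_n=\lfloor R_n/r_n\rfloor+1$. The blocks $B_1,\ldots,B_{K_n}$ are the unique subsets of $\mathcal{S}_n$ with $\bigcup_{j\le K_n}B_j=\mathcal{S}_n$, $\#B_i=r_n$ and $\max B_i<\min B_{i+1}$ for $i\le K_n-1$ (so $\#B_{K_n}=R_n-(K_n-1)r_n$ and $K_n\le k_n$). *)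

theory Defs
  imports "HOL-Probability.Probability"
begin

text \<open>An alpha-stable law (0 < alpha < 2, alpha \<noteq> 1 suffices here), given by its
  characteristic function exp(-c|t|^alpha (1 - i beta sgn t tan(pi alpha/2)) + i gamma t).\<close>
definition stable_law :: "real \<Rightarrow> real measure \<Rightarrow> bool" where
  "stable_law a L \<longleftrightarrow> real_distribution L \<and>
     (\<exists>c \<beta> \<gamma>. c > 0 \<and> -1 \<le> \<beta> \<and> \<beta> \<le> 1 \<and>
        (\<forall>t. char L t = exp (- complex_of_real (c * \<bar>t\<bar> powr a) *
               (1 - \<i> * complex_of_real (\<beta> * sgn t * tan (pi * a / 2)))
               + \<i> * complex_of_real (\<gamma> * t))))"

definition walk :: "(nat \<Rightarrow> 'a \<Rightarrow> int) \<Rightarrow> nat \<Rightarrow> 'a \<Rightarrow> int" where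
  "walk X n \<omega> = (\<Sum>k\<in>{1..n}. X k \<omega>)"

definition centered_stable_attraction ::
  "'a measure \<Rightarrow> (nat \<Rightarrow> 'a \<Rightarrow> int) \<Rightarrow> real \<Rightarrow> bool" where
  "centered_stable_attraction M X a \<longleftrightarrow>
     (\<exists>an :: nat \<Rightarrow> real. \<exists>L. (\<forall>n. an n > 0) \<and> stable_law a L \<and>
        weak_conv_m (\<lambda>n. distr M borel (\<lambda>\<omega>. real_of_int (walk X n \<omega>) / an n)) L)"

definition walk_range :: "(nat \<Rightarrow> 'a \<Rightarrow> int) \<Rightarrow> nat \<Rightarrow> 'a \<Rightarrow> int set" where
  "walk_range X n \<omega> = (\<lambda>j. walk X j \<omega>) ` {1..n}"

definition block_len :: "(nat \<Rightarrow> nat) \<Rightarrow> nat \<Rightarrow> nat" where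
  "block_len k n = n div (k n - 1) + 1"

definition num_blocks :: "(nat \<Rightarrow> 'a \<Rightarrow> int) \<Rightarrow> (nat \<Rightarrow> nat) \<Rightarrow> nat \<Rightarrow> 'a \<Rightarrow> nat" where
  "num_blocks X k n \<omega> = card (walk_range X n \<omega>) div block_len k n + 1"

text \<open>Block B_j (1 \<le> j \<le> K_n): the j-th group of r_n consecutive elements of the
  range, listed in increasing order (the last block may be smaller, possibly empty).\<close>
definition block :: "(nat \<Rightarrow> 'a \<Rightarrow> int) \<Rightarrow> (nat \<Rightarrow> nat) \<Rightarrow> nat \<Rightarrow> 'a \<Rightarrow> nat \<Rightarrow> int set" where
  "block X k n \<omega> j = set (take (block_len k n)
      (drop ((j - 1) * block_len k n) (sorted_list_of_set (walk_range X n \<omega>))))"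

text \<open>M_B = max of the scenery over B, with M_{empty} = -infinity.\<close>
definition blockmax :: "(int \<Rightarrow> 'b \<Rightarrow> real) \<Rightarrow> int set \<Rightarrow> 'b \<Rightarrow> ereal" where
  "blockmax \<xi> B x = (SUP i\<in>B. ereal (\<xi> i x))"

definition Fjoint :: "'b measure \<Rightarrow> (int \<Rightarrow> 'b \<Rightarrow> real) \<Rightarrow> int set \<Rightarrow> real \<Rightarrow> real" where
  "Fjoint N \<xi> I u = measure N {x \<in> space N. \<forall>i\<in>I. \<xi> i x \<le> u}"

definition stationary_field :: "'b measure \<Rightarrow> (int \<Rightarrow> 'b \<Rightarrow> real) \<Rightarrow> bool" where
  "stationary_field N \<xi> \<longleftrightarrow> (\<forall>I h. finite I \<longrightarrow>
     distr N (PiM I (\<lambda>_. borel)) (\<lambda>x. \<lambda>i\<in>I. \<xi> (i + h) x)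
   = distr N (PiM I (\<lambda>_. borel)) (\<lambda>x. \<lambda>i\<in>I. \<xi> i x))"

definition condition_D :: "'b measure \<Rightarrow> (int \<Rightarrow> 'b \<Rightarrow> real) \<Rightarrow> (nat \<Rightarrow> real)
    \<Rightarrow> (nat \<Rightarrow> nat \<Rightarrow> real) \<Rightarrow> (nat \<Rightarrow> nat) \<Rightarrow> bool" where
  "condition_D N \<xi> u \<alpha> l \<longleftrightarrow>
     (\<forall>n. l n > 0) \<and> (\<lambda>n. \<alpha> n (l n)) \<longlonglongrightarrow> 0 \<and>
     (\<lambda>n. real (l n) / real n) \<longlonglongrightarrow> 0 \<and>
     (\<forall>n m I J. finite I \<longrightarrow> finite J \<longrightarrow> I \<noteq> {} \<longrightarrow> J \<noteq> {} \<longrightarrow>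
        Max I < Min J \<longrightarrow> Min J - Max I \<ge> int m \<longrightarrow>
        \<bar>Fjoint N \<xi> (I \<union> J) (u n) - Fjoint N \<xi> I (u n) * Fjoint N \<xi> J (u n)\<bar> \<le> \<alpha> n m)"

definition condition_D' :: "'b measure \<Rightarrow> (int \<Rightarrow> 'b \<Rightarrow> real) \<Rightarrow> (nat \<Rightarrow> real)
    \<Rightarrow> (nat \<Rightarrow> nat \<Rightarrow> real) \<Rightarrow> (nat \<Rightarrow> nat) \<Rightarrow> (nat \<Rightarrow> nat) \<Rightarrow> bool" where
  "condition_D' N \<xi> u \<alpha> l k \<longleftrightarrow>
     filterlim k at_top sequentially \<and>
     (\<lambda>n. (real n)^2 / real (k n) * \<alpha> n (l n)) \<longlonglongrightarrow> 0 \<and>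
     (\<lambda>n. real (k n * l n) / real n) \<longlonglongrightarrow> 0 \<and>
     (\<lambda>n. real n * (\<Sum>j\<in>{1..n div k n}.
         measure N {x \<in> space N. \<xi> 0 x > u n \<and> \<xi> (int j) x > u n})) \<longlonglongrightarrow> 0"

end

theory Submission
  imports Defs
begin

text \<open>The range R_n of the walk satisfies R_n / n \<rightarrow> q almost surely (Kesten, Spitzer,
  Whitman). We derive this from a one-sided ergodic theorem for bounded functionals of the iid
  increments (Hopf's maximal inequality plus Kolmogorov's 0-1 law): counting last visits within
  a window of length m bounds R_n from above, counting sites that are never revisited bounds it
  from below. For a fixed realization of the walk, Bonferroni's inequalities give for every block
  B of size at most r_n \<approx> 2n/k_n
  1 - |B| p_n \<le> P(M_B \<le> u_n) \<le> 1 - |B| p_n + err_B with p_n = P(\<xi>(0) > u_n), where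
  D(u_n) controls pairs of distant sites and D'(u_n) pairs of close ones. The errors sum to o(1)
  and the sum of the |B| p_n is R_n p_n \<rightarrow> q \<tau>, so the product tends to exp(-q \<tau>).\<close>

section \<open>Ergodic averages of an iid integer sequence\<close>

definition int_seqs :: "(nat \<Rightarrow> int) measure" where
  "int_seqs = PiM UNIV (\<lambda>_. count_space UNIV)"

definition seq_shift :: "(nat \<Rightarrow> int) \<Rightarrow> nat \<Rightarrow> int" where
  "seq_shift s = (\<lambda>i. s (Suc i))"

definition seq_from :: "(nat \<Rightarrow> 'a \<Rightarrow> int) \<Rightarrow> nat \<Rightarrow> 'a \<Rightarrow> nat \<Rightarrow> int" where
  "seq_from Z k \<omega> = (\<lambda>i. Z (k + i) \<omega>)"

lemma space_int_seqs: "space int_seqs = UNIV"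
  by (simp add: int_seqs_def space_PiM)

lemma measurable_coord_int_seqs [measurable]:
  "(\<lambda>s. s i) \<in> measurable int_seqs (count_space UNIV)"
  unfolding int_seqs_def by simp

lemma measurable_seq_shift [measurable]: "seq_shift \<in> measurable int_seqs int_seqs"
  unfolding seq_shift_def int_seqs_def
  by (rule measurable_PiM_single') (auto simp: space_PiM)

lemma measurable_funpow_seq_shift [measurable]: "(seq_shift ^^ n) \<in> measurable int_seqs int_seqs"
  by (induction n) (auto intro: measurable_comp[OF _ measurable_seq_shift])

lemma seq_from_Suc: "seq_from Z (Suc k) \<omega> = seq_shift (seq_from Z k \<omega>)"
  by (simp add: seq_from_def seq_shift_def)

lemma seq_from_eq_funpow: "seq_from Z k \<omega> = (seq_shift ^^ k) (seq_from Z 0 \<omega>)"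
  by (induction k) (simp add: seq_from_def, simp add: seq_from_Suc)

locale iid_int_process = prob_space M for M :: "'a measure" +
  fixes Z :: "nat \<Rightarrow> 'a \<Rightarrow> int"
  assumes Z_measurable: "\<And>i. Z i \<in> measurable M (count_space UNIV)"
    and Z_indep: "indep_vars (\<lambda>_. count_space UNIV) Z UNIV"
    and Z_ident: "\<And>i. distr M (count_space UNIV) (Z i) = distr M (count_space UNIV) (Z 0)"
begin

lemma measurable_seq_from [measurable]: "seq_from Z k \<in> measurable M int_seqs"
  unfolding seq_from_def int_seqs_def
  by (rule measurable_PiM_single') (auto simp: space_PiM Z_measurable)

lemma prob_Z_vimage: "prob (Z i -` B \<inter> space M) = prob (Z 0 -` B \<inter> space M)"
proof -
  have "measure (distr M (count_space UNIV) (Z i)) B = measure (distr M (count_space UNIV) (Z 0)) B"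
    by (simp only: Z_ident[of i])
  then show ?thesis
    using Z_measurable[of i] Z_measurable[of 0] by (simp add: measure_distr)
qed

lemma prob_cylinder:
  assumes J: "finite J"
  shows "prob {\<omega> \<in> space M. \<forall>j\<in>J. Z (k + j) \<omega> \<in> A j} = (\<Prod>j\<in>J. prob (Z 0 -` A j \<inter> space M))"
proof (cases "J = {}")
  case True then show ?thesis by (simp add: prob_space)
next
  case False
  have ind: "indep_sets (\<lambda>i. {Z i -` A \<inter> space M | A. A \<in> sets (count_space UNIV)}) UNIV"
    using Z_indep unfolding indep_vars_def2 by simp
  have eq: "{\<omega> \<in> space M. \<forall>j\<in>J. Z (k + j) \<omega> \<in> A j} = (\<Inter>i\<in>(+) k ` J. Z i -` A (i - k) \<inter> space M)"
    using False by auto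
  have "prob (\<Inter>i\<in>(+) k ` J. Z i -` A (i - k) \<inter> space M)
      = (\<Prod>i\<in>(+) k ` J. prob (Z i -` A (i - k) \<inter> space M))"
    by (rule indep_setsD[OF ind]) (use False J in auto)
  also have "\<dots> = (\<Prod>j\<in>J. prob (Z (k + j) -` A j \<inter> space M))"
    by (subst prod.reindex) (auto simp: inj_on_def)
  also have "\<dots> = (\<Prod>j\<in>J. prob (Z 0 -` A j \<inter> space M))"
    by (intro prod.cong refl prob_Z_vimage)
  finally show ?thesis using eq by simp
qed

lemma distr_seq_from: "distr M int_seqs (seq_from Z k) = distr M int_seqs (seq_from Z 0)"
proof (rule measure_eqI_PiM_infinite)
  show "sets (distr M int_seqs (seq_from Z k)) = sets (PiM UNIV (\<lambda>_. count_space UNIV))"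
    "sets (distr M int_seqs (seq_from Z 0)) = sets (PiM UNIV (\<lambda>_. count_space UNIV))"
    by (simp_all add: int_seqs_def)
  show "finite_measure (distr M int_seqs (seq_from Z k))"
    using prob_space_distr[of "seq_from Z k" int_seqs] by (simp add: prob_space_def)
  fix A :: "nat \<Rightarrow> int set" and J :: "nat set"
  assume J: "finite J"
  let ?C = "prod_emb UNIV (\<lambda>_. count_space UNIV) J (Pi\<^sub>E J A)"
  have "emeasure (distr M int_seqs (seq_from Z k)) ?C = ennreal (\<Prod>j\<in>J. prob (Z 0 -` A j \<inter> space M))"
    for k
  proof -
    have "?C \<in> sets int_seqs"
      unfolding int_seqs_def using J by (intro sets_PiM_I) auto
    then have "emeasure (distr M int_seqs (seq_from Z k)) ?C = emeasure M (seq_from Z k -` ?C \<inter> space M)"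
      by (simp add: emeasure_distr)
    also have "seq_from Z k -` ?C \<inter> space M = {\<omega> \<in> space M. \<forall>j\<in>J. Z (k + j) \<omega> \<in> A j}"
      by (auto simp: prod_emb_def seq_from_def PiE_iff)
    finally show ?thesis
      using prob_cylinder[OF J] by (simp add: emeasure_eq_measure)
  qed
  then show "emeasure (distr M int_seqs (seq_from Z k)) ?C = emeasure (distr M int_seqs (seq_from Z 0)) ?C"
    by simp
qed

lemma integral_seq_from:
  fixes F :: "(nat \<Rightarrow> int) \<Rightarrow> real"
  assumes "F \<in> borel_measurable int_seqs"
  shows "(\<integral>\<omega>. F (seq_from Z k \<omega>) \<partial>M) = (\<integral>\<omega>. F (seq_from Z 0 \<omega>) \<partial>M)"
  using assms distr_seq_from[of k] by (metis integral_distr measurable_seq_from)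

end

fun max_partial_sum :: "((nat \<Rightarrow> int) \<Rightarrow> real) \<Rightarrow> nat \<Rightarrow> (nat \<Rightarrow> int) \<Rightarrow> real" where
  "max_partial_sum g 0 s = 0"
| "max_partial_sum g (Suc n) s = max 0 (g s + max_partial_sum g n (seq_shift s))"

lemma max_partial_sum_nonneg: "0 \<le> max_partial_sum g n s"
  by (cases n) auto

lemma max_partial_sum_mono: "max_partial_sum g n s \<le> max_partial_sum g (Suc n) s"
proof (induction n arbitrary: s)
  case (Suc n)
  have "g s + max_partial_sum g n (seq_shift s) \<le> g s + max_partial_sum g (Suc n) (seq_shift s)"
    using Suc by simp
  then show ?case by (simp add: max_def)
qed simp

lemma measurable_max_partial_sum [measurable]:
  assumes [measurable]: "g \<in> borel_measurable int_seqs"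
  shows "max_partial_sum g n \<in> borel_measurable int_seqs"
proof (induction n)
  case (Suc n)
  have [measurable]: "max_partial_sum g n \<in> borel_measurable int_seqs" by fact
  have "(\<lambda>s. max 0 (g s + max_partial_sum g n (seq_shift s))) \<in> borel_measurable int_seqs"
    by measurable
  then show ?case by simp
qed simp

lemma max_partial_sum_le:
  assumes "\<And>s. \<bar>g s\<bar> \<le> B"
  shows "max_partial_sum g n s \<le> real n * B"
proof (induction n arbitrary: s)
  case (Suc n)
  have "0 \<le> B" using assms[of s] by simp
  moreover have "g s + max_partial_sum g n (seq_shift s) \<le> B + real n * B"
    using assms[of s] Suc[of "seq_shift s"] by simp
  ultimately show ?case by (simp add: algebra_simps)
qed simp

lemma sum_funpow_le_max_partial_sum:
  "j \<le> n \<Longrightarrow> (\<Sum>k<j. g ((seq_shift ^^ k) s)) \<le> max_partial_sum g n s"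
proof (induction n arbitrary: s j)
  case (Suc n)
  show ?case
  proof (cases j)
    case 0 then show ?thesis by (simp add: max_partial_sum_nonneg)
  next
    case (Suc j')
    have "(\<Sum>k<j. g ((seq_shift ^^ k) s)) = g s + (\<Sum>k<j'. g ((seq_shift ^^ k) (seq_shift s)))"
      unfolding Suc by (subst sum.lessThan_Suc_shift) (simp add: funpow_Suc_right del: funpow.simps)
    also have "\<dots> \<le> g s + max_partial_sum g n (seq_shift s)"
      using Suc.IH[of j' "seq_shift s"] Suc.prems Suc by simp
    finally show ?thesis by simp
  qed
qed simp

lemma max_partial_sum_eq_0:
  assumes "\<And>k. g ((seq_shift ^^ k) s) = 0"
  shows "max_partial_sum g n s = 0"
  using assms
proof (induction n arbitrary: s)
  case (Suc n)
  have "\<And>k. g ((seq_shift ^^ k) (seq_shift s)) = 0"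
    using Suc.prems by (metis funpow_Suc_right o_apply)
  then show ?case using Suc.IH Suc.prems[of 0] by simp
qed simp

lemma (in prob_space) integrable_bounded:
  fixes f :: "'a \<Rightarrow> real"
  assumes "f \<in> borel_measurable M" "\<And>x. \<bar>f x\<bar> \<le> B"
  shows "integrable M f"
  by (rule integrable_const_bound[where B=B]) (use assms in auto)

context iid_int_process
begin

text \<open>Hopf's maximal ergodic inequality, via the telescoping identity for the
  stationary sequence of maximal partial sums.\<close>
lemma maximal_ergodic_inequality:
  assumes g[measurable]: "g \<in> borel_measurable int_seqs" and gB: "\<And>s. \<bar>g s\<bar> \<le> B"
  shows "0 \<le> (\<integral>\<omega>. (if max_partial_sum g n (seq_from Z 0 \<omega>) > 0 then g (seq_from Z 0 \<omega>) else 0) \<partial>M)"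
proof (cases n)
  case (Suc m)
  define F where "F = max_partial_sum g n"
  have F[measurable]: "F \<in> borel_measurable int_seqs" unfolding F_def by measurable
  have B: "0 \<le> B" using gB[of undefined] by simp
  have FB: "\<bar>F s\<bar> \<le> real n * B" for s
    using max_partial_sum_le[OF gB, where n=n and s=s] max_partial_sum_nonneg[of g n s] unfolding F_def by simp
  have pointwise: "F (seq_from Z 0 \<omega>) - F (seq_from Z 1 \<omega>)
      \<le> (if F (seq_from Z 0 \<omega>) > 0 then g (seq_from Z 0 \<omega>) else 0)" for \<omega>
  proof -
    let ?s = "seq_from Z 0 \<omega>"
    have s1: "seq_from Z 1 \<omega> = seq_shift ?s" using seq_from_Suc[of Z 0 \<omega>] by simp
    have "max_partial_sum g m (seq_shift ?s) \<le> F (seq_shift ?s)"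
      unfolding F_def Suc by (rule max_partial_sum_mono)
    then show ?thesis
      using s1 max_partial_sum_nonneg[of g n] unfolding F_def Suc by (auto simp: max_def)
  qed
  have integrable_F: "integrable M (\<lambda>\<omega>. F (seq_from Z k \<omega>))" for k
    by (rule integrable_bounded[OF _ FB]) measurable
  have "0 = (\<integral>\<omega>. F (seq_from Z 0 \<omega>) \<partial>M) - (\<integral>\<omega>. F (seq_from Z 1 \<omega>) \<partial>M)"
    using integral_seq_from[OF F, of 1] by simp
  also have "\<dots> = (\<integral>\<omega>. F (seq_from Z 0 \<omega>) - F (seq_from Z 1 \<omega>) \<partial>M)"
    using integrable_F by simp
  also have "\<dots> \<le> (\<integral>\<omega>. (if F (seq_from Z 0 \<omega>) > 0 then g (seq_from Z 0 \<omega>) else 0) \<partial>M)"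
  proof (rule integral_mono)
    show "integrable M (\<lambda>\<omega>. if F (seq_from Z 0 \<omega>) > 0 then g (seq_from Z 0 \<omega>) else 0)"
      by (rule integrable_bounded[where B=B]) (use gB B in auto)
  qed (use integrable_F pointwise in auto)
  finally show ?thesis unfolding F_def .
qed simp

end

definition birkhoff_sum :: "((nat \<Rightarrow> int) \<Rightarrow> real) \<Rightarrow> (nat \<Rightarrow> int) \<Rightarrow> nat \<Rightarrow> real" where
  "birkhoff_sum g s n = (\<Sum>k<n. g ((seq_shift ^^ k) s))"

text \<open>This encodes limsup (x n / n) > c; the margins 1 / (j + 1) make the quantifier
  countable, hence the corresponding sets measurable.\<close>
definition frequently_above_slope :: "(nat \<Rightarrow> real) \<Rightarrow> real \<Rightarrow> bool" where
  "frequently_above_slope x c \<longleftrightarrow> (\<exists>j::nat. \<forall>N. \<exists>n\<ge>N. x n > real n * (c + 1 / (real j + 1)))"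

definition slope_exceedance_set :: "((nat \<Rightarrow> int) \<Rightarrow> real) \<Rightarrow> real \<Rightarrow> (nat \<Rightarrow> int) set" where
  "slope_exceedance_set g c = {s. frequently_above_slope (birkhoff_sum g s) c}"

lemma frequently_above_slope_shift:
  assumes C: "\<And>n. \<bar>x n - y (Suc n)\<bar> \<le> C" and x: "frequently_above_slope x c"
  shows "frequently_above_slope y c"
proof -
  obtain j where j: "\<forall>N. \<exists>n\<ge>N. x n > real n * (c + 1 / (real j + 1))"
    using x unfolding frequently_above_slope_def by blast
  define \<delta> where "\<delta> = 1 / (real j + 1)"
  have \<delta>: "0 < \<delta>" "\<delta> \<le> 1" "1 / (real (2 * j + 1) + 1) = \<delta> / 2"
    unfolding \<delta>_def by (auto simp: field_simps)
  define N0 where "N0 = nat \<lceil>2 * (C + \<bar>c\<bar> + 1) / \<delta>\<rceil>"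
  have "\<exists>n\<ge>N. y n > real n * (c + \<delta> / 2)" for N
  proof -
    obtain n where n: "n \<ge> max N N0" "x n > real n * (c + \<delta>)"
      using j \<delta>_def by blast
    have "real n \<ge> 2 * (C + \<bar>c\<bar> + 1) / \<delta>"
      using n(1) unfolding N0_def by linarith
    then have "real n * \<delta> \<ge> 2 * C + 2 * \<bar>c\<bar> + 2"
      using \<delta> by (simp add: pos_divide_le_eq algebra_simps)
    moreover have "real n * (c + \<delta>) - real (Suc n) * (c + \<delta> / 2) = real n * \<delta> / 2 - c - \<delta> / 2"
      by (simp add: algebra_simps)
    moreover have "y (Suc n) \<ge> x n - C" using C[of n] by linarith
    ultimately have "y (Suc n) > real (Suc n) * (c + \<delta> / 2)"
      using n(2) \<delta> abs_ge_self[of c] by linarith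
    then show ?thesis using n(1) by (intro exI[of _ "Suc n"]) auto
  qed
  then show ?thesis unfolding frequently_above_slope_def \<delta>(3)[symmetric] by blast
qed

lemma frequently_above_slope_unshift:
  assumes C: "\<And>n. \<bar>x n - y (Suc n)\<bar> \<le> C" and y: "frequently_above_slope y c"
  shows "frequently_above_slope x c"
proof -
  obtain j where j: "\<forall>N. \<exists>n\<ge>N. y n > real n * (c + 1 / (real j + 1))"
    using y unfolding frequently_above_slope_def by blast
  define \<delta> where "\<delta> = 1 / (real j + 1)"
  have \<delta>: "0 < \<delta>" "\<delta> \<le> 1" "1 / (real (2 * j + 1) + 1) = \<delta> / 2"
    unfolding \<delta>_def by (auto simp: field_simps)
  define N0 where "N0 = nat \<lceil>2 * (C + \<bar>c\<bar> + 1) / \<delta>\<rceil>"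
  have "\<exists>n\<ge>N. x n > real n * (c + \<delta> / 2)" for N
  proof -
    obtain n where n: "n \<ge> Suc (max N N0)" "y n > real n * (c + \<delta>)"
      using j \<delta>_def by blast
    then obtain m where m: "n = Suc m" "m \<ge> max N N0" by (cases n) auto
    have "real m \<ge> 2 * (C + \<bar>c\<bar> + 1) / \<delta>"
      using m(2) unfolding N0_def by linarith
    then have "real m * \<delta> \<ge> 2 * C + 2 * \<bar>c\<bar> + 2"
      using \<delta> by (simp add: pos_divide_le_eq algebra_simps)
    moreover have "real (Suc m) * (c + \<delta>) - real m * (c + \<delta> / 2) = real m * \<delta> / 2 + c + \<delta>"
      by (simp add: algebra_simps)
    moreover have "x m \<ge> y (Suc m) - C" using C[of m] by linarith
    ultimately have "x m > real m * (c + \<delta> / 2)"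
      using n(2)[unfolded m(1)] \<delta> abs_ge_minus_self[of c] by linarith
    then show ?thesis using m(2) by (intro exI[of _ m]) auto
  qed
  then show ?thesis unfolding frequently_above_slope_def \<delta>(3)[symmetric] by blast
qed

lemma birkhoff_sum_seq_shift: "birkhoff_sum g (seq_shift s) n = birkhoff_sum g s (Suc n) - g s"
  unfolding birkhoff_sum_def
  by (subst sum.lessThan_Suc_shift) (simp add: funpow_Suc_right del: funpow.simps)

lemma slope_exceedance_set_funpow_shift:
  assumes gB: "\<And>s. \<bar>g s\<bar> \<le> B"
  shows "(seq_shift ^^ m) s \<in> slope_exceedance_set g c \<longleftrightarrow> s \<in> slope_exceedance_set g c"
proof (induction m)
  case (Suc m)
  have "\<bar>birkhoff_sum g (seq_shift t) n - birkhoff_sum g t (Suc n)\<bar> \<le> B" for t n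
    using gB[of t] by (simp add: birkhoff_sum_seq_shift)
  then have "seq_shift t \<in> slope_exceedance_set g c \<longleftrightarrow> t \<in> slope_exceedance_set g c" for t
    unfolding slope_exceedance_set_def
    using frequently_above_slope_shift frequently_above_slope_unshift by blast
  then show ?case using Suc by simp
qed simp

lemma slope_exceedance_set_sets [measurable]:
  assumes [measurable]: "g \<in> borel_measurable int_seqs"
  shows "slope_exceedance_set g c \<in> sets int_seqs"
proof -
  have [measurable]: "(\<lambda>s. birkhoff_sum g s n) \<in> borel_measurable int_seqs" for n
    unfolding birkhoff_sum_def by measurable
  have "{s \<in> space int_seqs. \<exists>j::nat. \<forall>N::nat. \<exists>n::nat. N \<le> n \<and>
      birkhoff_sum g s n > real n * (c + 1 / (real j + 1))} \<in> sets int_seqs"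
    by measurable
  then show ?thesis
    unfolding slope_exceedance_set_def frequently_above_slope_def space_int_seqs by simp
qed

definition slope_excess :: "((nat \<Rightarrow> int) \<Rightarrow> real) \<Rightarrow> real \<Rightarrow> (nat \<Rightarrow> int) \<Rightarrow> real" where
  "slope_excess g c s = (if s \<in> slope_exceedance_set g c then g s - c else 0)"

lemma measurable_slope_excess [measurable]:
  assumes [measurable]: "g \<in> borel_measurable int_seqs"
  shows "slope_excess g c \<in> borel_measurable int_seqs"
  unfolding slope_excess_def by measurable

lemma abs_slope_excess_le: "(\<And>s. \<bar>g s\<bar> \<le> B) \<Longrightarrow> \<bar>slope_excess g c s\<bar> \<le> B + \<bar>c\<bar>"
  unfolding slope_excess_def by (smt (verit))

lemma max_partial_sum_pos_iff_slope_exceedance: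
  assumes gB: "\<And>s. \<bar>g s\<bar> \<le> B"
  shows "(\<exists>n. max_partial_sum (slope_excess g c) n s > 0) \<longleftrightarrow> s \<in> slope_exceedance_set g c"
proof
  assume "\<exists>n. max_partial_sum (slope_excess g c) n s > 0"
  then show "s \<in> slope_exceedance_set g c"
    using max_partial_sum_eq_0[of "slope_excess g c" s] slope_exceedance_set_funpow_shift[OF gB]
    unfolding slope_excess_def by fastforce
next
  assume s: "s \<in> slope_exceedance_set g c"
  then obtain j n where n: "birkhoff_sum g s n > real n * (c + 1 / (real j + 1))"
    unfolding slope_exceedance_set_def frequently_above_slope_def by blast
  have "real n * c \<le> real n * (c + 1 / (real j + 1))"
    by (intro mult_left_mono) auto
  moreover have "(\<Sum>k<n. slope_excess g c ((seq_shift ^^ k) s)) = birkhoff_sum g s n - real n * c"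
    using s slope_exceedance_set_funpow_shift[OF gB, where s=s and c=c]
    unfolding slope_excess_def birkhoff_sum_def by (simp add: sum_subtractf)
  ultimately have "(\<Sum>k<n. slope_excess g c ((seq_shift ^^ k) s)) > 0" using n by linarith
  then show "\<exists>n. max_partial_sum (slope_excess g c) n s > 0"
    using sum_funpow_le_max_partial_sum[of n n "slope_excess g c" s] by (meson le_refl less_le_trans)
qed

context iid_int_process
begin

definition coord_sigma :: "nat \<Rightarrow> 'a set set" where
  "coord_sigma i = sigma_sets (space M) {Z i -` B \<inter> space M | B. B \<in> sets (count_space (UNIV::int set))}"

lemma indep_coord_sigma: "indep_sets coord_sigma UNIV"
  using Z_indep unfolding indep_vars_def coord_sigma_def by simp

lemma sigma_algebra_coord_sigma: "sigma_algebra (space M) (coord_sigma i)"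
  unfolding coord_sigma_def by (rule sigma_algebra_sigma_sets) auto

lemma coord_sigma_subset: "coord_sigma i \<subseteq> Pow (space M)"
  using sigma_algebra_coord_sigma[of i] by (simp add: sigma_algebra_def algebra_iff_Un)

lemma measurable_seq_from_tail:
  "seq_from Z m \<in> measurable (sigma (space M) (\<Union>i\<in>{m..}. coord_sigma i)) int_seqs"
proof -
  let ?G = "\<Union>i\<in>{m..}. coord_sigma i"
  have G: "?G \<subseteq> Pow (space M)" using coord_sigma_subset by blast
  have "Z (m + i) \<in> measurable (sigma (space M) ?G) (count_space UNIV)" for i
  proof (rule measurableI)
    fix B :: "int set"
    have "Z (m + i) -` B \<inter> space M \<in> coord_sigma (m + i)"
      unfolding coord_sigma_def by (rule sigma_sets.Basic) auto
    then have "Z (m + i) -` B \<inter> space M \<in> ?G" by auto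
    then show "Z (m + i) -` B \<inter> space (sigma (space M) ?G) \<in> sets (sigma (space M) ?G)"
      using G by (simp add: sigma_sets.Basic)
  qed simp
  then show ?thesis
    unfolding seq_from_def int_seqs_def
    by (intro measurable_PiM_single') (auto simp: space_PiM)
qed

text \<open>The slope exceedance set is shift invariant, hence a tail event of the coordinates.\<close>
lemma slope_exceedance_zero_one:
  assumes g[measurable]: "g \<in> borel_measurable int_seqs" and gB: "\<And>s. \<bar>g s\<bar> \<le> B"
  shows "prob {\<omega> \<in> space M. seq_from Z 0 \<omega> \<in> slope_exceedance_set g c} \<in> {0, 1}"
proof -
  let ?A = "{\<omega> \<in> space M. seq_from Z 0 \<omega> \<in> slope_exceedance_set g c}"
  have "?A \<in> sigma_sets (space M) (\<Union> (coord_sigma ` {n..}))" for n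
  proof -
    let ?G = "\<Union>i\<in>{n..}. coord_sigma i"
    have G: "?G \<subseteq> Pow (space M)" using coord_sigma_subset by blast
    have "?A = seq_from Z n -` slope_exceedance_set g c \<inter> space (sigma (space M) ?G)"
      using G slope_exceedance_set_funpow_shift[OF gB, where m=n and c=c] by (auto simp: seq_from_eq_funpow[of Z n])
    also have "\<dots> \<in> sets (sigma (space M) ?G)"
      by (rule measurable_sets[OF measurable_seq_from_tail slope_exceedance_set_sets[OF g]])
    finally show ?thesis using G by simp
  qed
  then have "?A \<in> tail_events coord_sigma" unfolding tail_events_def by blast
  then show ?thesis
    using kolmogorov_0_1_law[OF sigma_algebra_coord_sigma indep_coord_sigma] by blast
qed


lemma maximal_ergodic_slope_excess:
  assumes g[measurable]: "g \<in> borel_measurable int_seqs" and gB: "\<And>s. \<bar>g s\<bar> \<le> B"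
  shows "0 \<le> expectation (\<lambda>\<omega>. g (seq_from Z 0 \<omega>)) - c
    + (B + \<bar>c\<bar>) * (1 - prob {\<omega> \<in> space M. max_partial_sum (slope_excess g c) n (seq_from Z 0 \<omega>) > 0})"
proof -
  let ?h = "slope_excess g c"
  define E where "E = {\<omega> \<in> space M. max_partial_sum ?h n (seq_from Z 0 \<omega>) > 0}"
  have E[measurable]: "E \<in> events" unfolding E_def by measurable
  have B: "0 \<le> B" using gB[of undefined] by simp
  have ig: "integrable M (\<lambda>\<omega>. g (seq_from Z 0 \<omega>))"
    by (rule integrable_bounded[OF _ gB]) measurable
  have ii: "integrable M (\<lambda>\<omega>. (B + \<bar>c\<bar>) * indicator (space M - E) \<omega>)"
    by (rule integrable_bounded[where B="B + \<bar>c\<bar>"]) (use B in \<open>auto simp: indicator_def\<close>)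
  have "0 \<le> (\<integral>\<omega>. (if max_partial_sum ?h n (seq_from Z 0 \<omega>) > 0 then ?h (seq_from Z 0 \<omega>) else 0) \<partial>M)"
    by (rule maximal_ergodic_inequality[OF _ abs_slope_excess_le[OF gB]]) measurable
  also have "\<dots> \<le> (\<integral>\<omega>. (g (seq_from Z 0 \<omega>) - c) + (B + \<bar>c\<bar>) * indicator (space M - E) \<omega> \<partial>M)"
  proof (rule integral_mono)
    show "integrable M (\<lambda>\<omega>. if max_partial_sum ?h n (seq_from Z 0 \<omega>) > 0 then ?h (seq_from Z 0 \<omega>) else 0)"
      by (rule integrable_bounded[where B="B + \<bar>c\<bar>"]) (use abs_slope_excess_le[OF gB] B in auto)
    fix \<omega> assume \<omega>: "\<omega> \<in> space M"
    have "\<omega> \<in> E \<Longrightarrow> seq_from Z 0 \<omega> \<in> slope_exceedance_set g c"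
      using max_partial_sum_pos_iff_slope_exceedance[where g=g and B=B, OF gB] unfolding E_def by blast
    then show "(if max_partial_sum ?h n (seq_from Z 0 \<omega>) > 0 then ?h (seq_from Z 0 \<omega>) else 0)
        \<le> (g (seq_from Z 0 \<omega>) - c) + (B + \<bar>c\<bar>) * indicator (space M - E) \<omega>"
      using \<omega> gB[of "seq_from Z 0 \<omega>"] unfolding E_def slope_excess_def indicator_def
      by (auto simp: abs_le_iff)
  qed (use ig ii in auto)
  also have "\<dots> = expectation (\<lambda>\<omega>. g (seq_from Z 0 \<omega>)) - c + (B + \<bar>c\<bar>) * prob (space M - E)"
    using ig ii by (simp add: prob_space)
  also have "prob (space M - E) = 1 - prob E"
    using prob_compl[OF E] .
  finally show ?thesis unfolding E_def .
qed

text \<open>By the 0-1 law the set is null or almost sure; in the latter case the previous bound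
  would force the expectation to be at least c.\<close>
lemma AE_not_in_slope_exceedance_set:
  assumes g[measurable]: "g \<in> borel_measurable int_seqs" and gB: "\<And>s. \<bar>g s\<bar> \<le> B"
    and c: "expectation (\<lambda>\<omega>. g (seq_from Z 0 \<omega>)) < c"
  shows "AE \<omega> in M. seq_from Z 0 \<omega> \<notin> slope_exceedance_set g c"
proof -
  define A where "A = {\<omega> \<in> space M. seq_from Z 0 \<omega> \<in> slope_exceedance_set g c}"
  have A[measurable]: "A \<in> events" unfolding A_def by measurable
  define E where "E n = {\<omega> \<in> space M. max_partial_sum (slope_excess g c) n (seq_from Z 0 \<omega>) > 0}" for n
  have E[measurable]: "E n \<in> events" for n unfolding E_def by measurable
  have "prob A \<noteq> 1"
  proof
    assume "prob A = 1"
    moreover have "incseq E"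
      unfolding incseq_Suc_iff E_def using max_partial_sum_mono by (auto intro: less_le_trans)
    moreover have "(\<Union>n. E n) = A"
      using max_partial_sum_pos_iff_slope_exceedance[where g=g and B=B, OF gB] unfolding E_def A_def by blast
    ultimately have "(\<lambda>n. prob (E n)) \<longlonglongrightarrow> 1"
      using finite_Lim_measure_incseq[of E] E by (metis image_subset_iff)
    then have "(\<lambda>n. expectation (\<lambda>\<omega>. g (seq_from Z 0 \<omega>)) - c + (B + \<bar>c\<bar>) * (1 - prob (E n)))
        \<longlonglongrightarrow> expectation (\<lambda>\<omega>. g (seq_from Z 0 \<omega>)) - c + (B + \<bar>c\<bar>) * (1 - 1)"
      by (intro tendsto_intros)
    then have "0 \<le> expectation (\<lambda>\<omega>. g (seq_from Z 0 \<omega>)) - c"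
      using LIMSEQ_le_const[OF _ exI[of _ 0]] maximal_ergodic_slope_excess[OF g gB]
      unfolding E_def by fastforce
    with c show False by simp
  qed
  then have "prob A = 0" using slope_exceedance_zero_one[OF g gB, of c] unfolding A_def by blast
  then have "A \<in> null_sets M" using A by (simp add: null_sets_def emeasure_eq_measure)
  then have "AE \<omega> in M. \<omega> \<notin> A" by (rule AE_not_in)
  with AE_space show ?thesis by eventually_elim (auto simp: A_def)
qed

lemma ergodic_average_upper_bound:
  assumes g[measurable]: "g \<in> borel_measurable int_seqs" and gB: "\<And>s. \<bar>g s\<bar> \<le> B"
  shows "AE \<omega> in M. \<forall>\<epsilon>>0. eventually (\<lambda>n. (\<Sum>k<n. g (seq_from Z k \<omega>))
           \<le> real n * (expectation (\<lambda>\<omega>. g (seq_from Z 0 \<omega>)) + \<epsilon>)) sequentially"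
proof -
  define E0 where "E0 = expectation (\<lambda>\<omega>. g (seq_from Z 0 \<omega>))"
  have "AE \<omega> in M. \<forall>i::nat. seq_from Z 0 \<omega> \<notin> slope_exceedance_set g (E0 + 1 / (real i + 1))"
    unfolding AE_all_countable
    by (intro allI AE_not_in_slope_exceedance_set[OF g gB]) (simp add: E0_def)
  then show ?thesis unfolding E0_def[symmetric]
  proof eventually_elim
    case (elim \<omega>)
    show ?case
    proof (intro allI impI)
      fix \<epsilon> :: real assume "\<epsilon> > 0"
      then obtain i where i: "1 / (real i + 1) < \<epsilon> / 2"
        using reals_Archimedean[of "\<epsilon> / 2"] by (auto simp: inverse_eq_divide add.commute)
      let ?s = "seq_from Z 0 \<omega>"
      have "\<not> frequently_above_slope (birkhoff_sum g ?s) (E0 + 1 / (real i + 1))"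
        using elim unfolding slope_exceedance_set_def by simp
      then obtain N where N: "\<And>n. n \<ge> N \<Longrightarrow>
          birkhoff_sum g ?s n \<le> real n * (E0 + 1 / (real i + 1) + 1 / (real i + 1))"
        unfolding frequently_above_slope_def by (metis not_less)
      have "birkhoff_sum g ?s n \<le> real n * (E0 + \<epsilon>)" if "n \<ge> N" for n
      proof -
        have "real n * (E0 + 1 / (real i + 1) + 1 / (real i + 1)) \<le> real n * (E0 + \<epsilon>)"
          by (intro mult_left_mono) (use i in auto)
        then show ?thesis using N[OF that] by linarith
      qed
      moreover have "birkhoff_sum g ?s n = (\<Sum>k<n. g (seq_from Z k \<omega>))" for n
        unfolding birkhoff_sum_def by (metis seq_from_eq_funpow)
      ultimately show "eventually (\<lambda>n. (\<Sum>k<n. g (seq_from Z k \<omega>)) \<le> real n * (E0 + \<epsilon>)) sequentially"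
        unfolding eventually_sequentially by metis
    qed
  qed
qed

end

section \<open>The range of the walk\<close>

text \<open>Every value of the range has a last visit, and all but at most m of these last
  visits are followed by m steps away from that value.\<close>
lemma card_image_le_card_no_return_within:
  fixes P :: "nat \<Rightarrow> int"
  shows "card (P ` {1..n}) \<le> m + card {t\<in>{1..n}. \<forall>j\<in>{1..m}. P (t + j) \<noteq> P t}"
proof -
  let ?R = "P ` {1..n}"
  let ?G = "{t\<in>{1..n}. \<forall>j\<in>{1..m}. P (t + j) \<noteq> P t}"
  define last_visit where "last_visit v = Max {t\<in>{1..n}. P t = v}" for v
  have last_visit: "last_visit v \<in> {1..n} \<and> P (last_visit v) = v \<and> (\<forall>t\<in>{1..n}. P t = v \<longrightarrow> t \<le> last_visit v)"
    if "v \<in> ?R" for v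
  proof -
    have "{t\<in>{1..n}. P t = v} \<noteq> {}" using that by auto
    then show ?thesis using Max_in[of "{t\<in>{1..n}. P t = v}"] unfolding last_visit_def by auto
  qed
  have "inj_on last_visit ?R"
    by (rule inj_onI) (metis last_visit)
  then have "card ?R = card (last_visit ` ?R)" by (simp add: card_image)
  also have "\<dots> \<le> card (?G \<union> {n - m <.. n})"
  proof (rule card_mono)
    show "last_visit ` ?R \<subseteq> ?G \<union> {n - m <.. n}"
    proof
      fix t assume "t \<in> last_visit ` ?R"
      then obtain v where v: "v \<in> ?R" "t = last_visit v" by auto
      show "t \<in> ?G \<union> {n - m <.. n}"
      proof (cases "t + m \<le> n")
        case True
        have "P (t + j) \<noteq> P t" if "j \<in> {1..m}" for j
          using last_visit[OF v(1)] v(2) that True by force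
        then show ?thesis using last_visit[OF v(1)] v(2) by auto
      qed (use last_visit[OF v(1)] v(2) in auto)
    qed
  qed simp
  also have "\<dots> \<le> card ?G + m"
    using card_Un_le[of ?G "{n - m <.. n}"] by simp
  finally show ?thesis by simp
qed

lemma card_no_return_le_card_image:
  fixes P :: "nat \<Rightarrow> int"
  shows "card {t\<in>{1..n}. \<forall>j\<ge>1. P (t + j) \<noteq> P t} \<le> card (P ` {1..n})"
proof -
  let ?G = "{t\<in>{1..n}. \<forall>j\<ge>1. P (t + j) \<noteq> P t}"
  have later: "P t \<noteq> P s" if "s \<in> ?G" "s < t" for s t
    using that(1)[simplified, THEN conjunct2, THEN conjunct2, rule_format, of "t - s"] that(2) by simp
  have "inj_on P ?G"
  proof (rule inj_onI)
    fix a b assume "a \<in> ?G" "b \<in> ?G" "P a = P b"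
    then show "a = b" using later[of a b] later[of b a] by (cases a b rule: linorder_cases) auto
  qed
  then have "card ?G = card (P ` ?G)" by (simp add: card_image)
  also have "\<dots> \<le> card (P ` {1..n})" by (intro card_mono) auto
  finally show ?thesis .
qed

lemma tendsto_of_eventually_bounds:
  fixes x :: "nat \<Rightarrow> real"
  assumes "\<And>\<epsilon>. \<epsilon> > 0 \<Longrightarrow> eventually (\<lambda>n. x n \<le> q + \<epsilon>) sequentially"
    and "\<And>\<epsilon>. \<epsilon> > 0 \<Longrightarrow> eventually (\<lambda>n. x n \<ge> q - \<epsilon>) sequentially"
  shows "x \<longlonglongrightarrow> q"
proof (rule order_tendstoI)
  fix a assume "q < a"
  then have "eventually (\<lambda>n. x n \<le> q + (a - q) / 2) sequentially" by (intro assms) simp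
  then show "eventually (\<lambda>n. x n < a) sequentially"
    by (rule eventually_mono) (use \<open>q < a\<close> in \<open>auto simp: field_simps\<close>)
next
  fix a assume "a < q"
  then have "eventually (\<lambda>n. x n \<ge> q - (q - a) / 2) sequentially" by (intro assms) simp
  then show "eventually (\<lambda>n. a < x n) sequentially"
    by (rule eventually_mono) (use \<open>a < q\<close> in \<open>auto simp: field_simps\<close>)
qed

lemma eventually_le_real_mult:
  fixes \<epsilon> :: real assumes "\<epsilon> > 0"
  shows "eventually (\<lambda>n. K \<le> real n * \<epsilon>) sequentially"
proof -
  have "eventually (\<lambda>n. K / \<epsilon> \<le> real n) sequentially"
    using filterlim_real_sequentially by (simp add: filterlim_at_top)
  then show ?thesis by eventually_elim (use assms in \<open>simp add: pos_divide_le_eq\<close>)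
qed

definition partial_sum :: "(nat \<Rightarrow> 'a \<Rightarrow> int) \<Rightarrow> nat \<Rightarrow> 'a \<Rightarrow> int" where
  "partial_sum Z j \<omega> = (\<Sum>i<j. Z i \<omega>)"

definition no_return_within :: "nat \<Rightarrow> (nat \<Rightarrow> int) \<Rightarrow> real" where
  "no_return_within m s = (if \<forall>j\<in>{1..m}. (\<Sum>i<j. real_of_int (s i)) \<noteq> 0 then 1 else 0)"

definition no_return :: "(nat \<Rightarrow> int) \<Rightarrow> real" where
  "no_return s = (if \<forall>j\<ge>1. (\<Sum>i<j. real_of_int (s i)) \<noteq> 0 then 1 else 0)"

lemma measurable_real_coord_int_seqs [measurable]:
  "(\<lambda>s. real_of_int (s i)) \<in> borel_measurable int_seqs"
  by (rule measurable_compose[OF measurable_coord_int_seqs borel_measurable_count_space])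

lemma measurable_no_return_within [measurable]: "no_return_within m \<in> borel_measurable int_seqs"
  unfolding no_return_within_def by measurable

lemma measurable_no_return [measurable]: "no_return \<in> borel_measurable int_seqs"
  unfolding no_return_def by measurable

lemma sum_seq_from:
  "(\<Sum>i<j. real_of_int (seq_from Z t \<omega> i)) = real_of_int (partial_sum Z (t + j) \<omega> - partial_sum Z t \<omega>)"
proof -
  have "(\<Sum>i<t + j. Z i \<omega>) = (\<Sum>i<t. Z i \<omega>) + (\<Sum>i<j. Z (t + i) \<omega>)"
    by (induction j) (auto simp: add.assoc)
  then show ?thesis unfolding partial_sum_def seq_from_def by simp
qed

lemma no_return_within_seq_from:
  "no_return_within m (seq_from Z t \<omega>)
     = (if \<forall>j\<in>{1..m}. partial_sum Z (t + j) \<omega> \<noteq> partial_sum Z t \<omega> then 1 else 0)"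
  unfolding no_return_within_def sum_seq_from by simp

lemma no_return_seq_from:
  "no_return (seq_from Z t \<omega>) = (if \<forall>j\<ge>1. partial_sum Z (t + j) \<omega> \<noteq> partial_sum Z t \<omega> then 1 else 0)"
  unfolding no_return_def sum_seq_from by simp

lemma real_card_eq_sum_indicator:
  "finite A \<Longrightarrow> real (card {t\<in>A. Q t}) = (\<Sum>t\<in>A. if Q t then 1 else 0)"
  by (simp add: sum.If_cases Int_def)

lemma card_range_le_sum_no_return_within:
  "real (card ((\<lambda>j. partial_sum Z j \<omega>) ` {1..n}))
     \<le> real m + (\<Sum>k<Suc n. no_return_within m (seq_from Z k \<omega>))"
proof -
  let ?P = "\<lambda>j. partial_sum Z j \<omega>"
  have "real (card (?P ` {1..n})) \<le> real m + real (card {t\<in>{1..n}. \<forall>j\<in>{1..m}. ?P (t + j) \<noteq> ?P t})"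
    using card_image_le_card_no_return_within[of ?P n m] by linarith
  also have "real (card {t\<in>{1..n}. \<forall>j\<in>{1..m}. ?P (t + j) \<noteq> ?P t})
      = (\<Sum>t\<in>{1..n}. no_return_within m (seq_from Z t \<omega>))"
    by (subst real_card_eq_sum_indicator) (simp_all add: no_return_within_seq_from)
  also have "\<dots> \<le> (\<Sum>k<Suc n. no_return_within m (seq_from Z k \<omega>))"
    by (rule sum_mono2) (auto simp: no_return_within_def)
  finally show ?thesis by simp
qed

lemma card_range_ge_sum_no_return:
  "real n - real (card ((\<lambda>j. partial_sum Z j \<omega>) ` {1..n}))
     \<le> (\<Sum>k<Suc n. 1 - no_return (seq_from Z k \<omega>))"
proof -
  let ?P = "\<lambda>j. partial_sum Z j \<omega>"
  have "(\<Sum>t\<in>{1..n}. no_return (seq_from Z t \<omega>)) = real (card {t\<in>{1..n}. \<forall>j\<ge>1. ?P (t + j) \<noteq> ?P t})"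
    by (subst real_card_eq_sum_indicator) (simp_all add: no_return_seq_from)
  also have "\<dots> \<le> real (card (?P ` {1..n}))"
    using card_no_return_le_card_image[of n ?P] by simp
  finally have "real n - real (card (?P ` {1..n})) \<le> (\<Sum>t\<in>{1..n}. 1 - no_return (seq_from Z t \<omega>))"
    by (simp add: sum_subtractf)
  also have "\<dots> \<le> (\<Sum>k<Suc n. 1 - no_return (seq_from Z k \<omega>))"
    by (rule sum_mono2) (auto simp: no_return_def)
  finally show ?thesis .
qed

lemma partial_sum_0 [simp]: "partial_sum Z 0 \<omega> = 0"
  by (simp add: partial_sum_def)

context iid_int_process
begin

definition no_return_prob :: real where
  "no_return_prob = prob {\<omega>\<in>space M. \<forall>j\<ge>1. partial_sum Z j \<omega> \<noteq> 0}"

definition no_return_within_prob :: "nat \<Rightarrow> real" where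
  "no_return_within_prob m = prob {\<omega>\<in>space M. \<forall>j\<in>{1..m}. partial_sum Z j \<omega> \<noteq> 0}"

lemma expectation_no_return_within:
  "expectation (\<lambda>\<omega>. no_return_within m (seq_from Z 0 \<omega>)) = no_return_within_prob m"
proof -
  have "(\<lambda>\<omega>. no_return_within m (seq_from Z 0 \<omega>)) = indicator {\<omega>. \<forall>j\<in>{1..m}. partial_sum Z j \<omega> \<noteq> 0}"
    by (auto simp: no_return_within_seq_from partial_sum_def indicator_def)
  then show ?thesis
    unfolding no_return_within_prob_def by (simp add: Collect_conj_eq Int_commute)
qed

lemma expectation_no_return: "expectation (\<lambda>\<omega>. no_return (seq_from Z 0 \<omega>)) = no_return_prob"
proof -
  have "(\<lambda>\<omega>. no_return (seq_from Z 0 \<omega>)) = indicator {\<omega>. \<forall>j\<ge>1. partial_sum Z j \<omega> \<noteq> 0}"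
    by (auto simp: no_return_seq_from partial_sum_def indicator_def)
  then show ?thesis
    unfolding no_return_prob_def by (simp add: Collect_conj_eq Int_commute)
qed

lemma no_return_within_prob_tendsto: "no_return_within_prob \<longlonglongrightarrow> no_return_prob"
proof -
  define G where "G m = {\<omega>\<in>space M. \<forall>j\<in>{1..m}. partial_sum Z j \<omega> \<noteq> 0}" for m
  have "G m = seq_from Z 0 -` {s. \<forall>j\<in>{1..m}. (\<Sum>i<j. real_of_int (s i)) \<noteq> 0} \<inter> space M" for m
    unfolding G_def using sum_seq_from[of Z 0] by (auto simp: partial_sum_0)
  moreover have "{s. \<forall>j\<in>{1..m}. (\<Sum>i<j. real_of_int (s i)) \<noteq> 0} \<in> sets int_seqs" for m
  proof -
    have "{s \<in> space int_seqs. \<forall>j\<in>{1..m}. (\<Sum>i<j. real_of_int (s i)) \<noteq> 0} \<in> sets int_seqs"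
      by measurable
    then show ?thesis by (simp add: space_int_seqs)
  qed
  ultimately have "range G \<subseteq> events" by (auto intro: measurable_sets[OF measurable_seq_from])
  moreover have "decseq G" unfolding decseq_def G_def by auto
  moreover have "(\<Inter>m. G m) = {\<omega>\<in>space M. \<forall>j\<ge>1. partial_sum Z j \<omega> \<noteq> 0}"
    unfolding G_def by (auto; metis atLeastAtMost_iff order_refl)
  ultimately show ?thesis
    using finite_Lim_measure_decseq[of G]
    unfolding no_return_within_prob_def no_return_prob_def G_def by simp
qed

lemma range_ratio_upper_bound:
  "AE \<omega> in M. \<forall>\<epsilon>>0. eventually (\<lambda>n.
     real (card ((\<lambda>j. partial_sum Z j \<omega>) ` {1..n})) \<le> real n * (no_return_prob + \<epsilon>)) sequentially"
proof -
  have "AE \<omega> in M. \<forall>m. \<forall>\<epsilon>>0. eventually (\<lambda>n. (\<Sum>k<n. no_return_within m (seq_from Z k \<omega>))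
      \<le> real n * (no_return_within_prob m + \<epsilon>)) sequentially"
    unfolding AE_all_countable expectation_no_return_within[symmetric]
    by (intro allI ergodic_average_upper_bound[where B=1]) (auto simp: no_return_within_def)
  then show ?thesis
  proof eventually_elim
    case (elim \<omega>)
    let ?P = "\<lambda>j. partial_sum Z j \<omega>"
    show ?case
    proof (intro allI impI)
      fix \<epsilon> :: real assume e: "\<epsilon> > 0"
      obtain m where m: "no_return_within_prob m < no_return_prob + \<epsilon> / 3"
        using order_tendstoD(2)[OF no_return_within_prob_tendsto, of "no_return_prob + \<epsilon> / 3"] e
        by (auto dest: eventually_happens)
      have "eventually (\<lambda>n. (\<Sum>k<n. no_return_within m (seq_from Z k \<omega>))
          \<le> real n * (no_return_within_prob m + \<epsilon> / 3)) sequentially"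
        using elim e by simp
      then have "eventually (\<lambda>n. (\<Sum>k<Suc n. no_return_within m (seq_from Z k \<omega>))
          \<le> real (Suc n) * (no_return_within_prob m + \<epsilon> / 3)) sequentially"
        by (rule eventually_sequentially_Suc[THEN iffD2])
      moreover have "eventually (\<lambda>n. 3 * real m + 3 + \<epsilon> \<le> real n * \<epsilon>) sequentially"
        by (rule eventually_le_real_mult[OF e])
      ultimately show "eventually (\<lambda>n. real (card (?P ` {1..n})) \<le> real n * (no_return_prob + \<epsilon>)) sequentially"
      proof eventually_elim
        case (elim n)
        note card_range_le_sum_no_return_within[of Z \<omega> n m]
        moreover have "real (Suc n) * (no_return_within_prob m + \<epsilon> / 3)
            = real n * no_return_within_prob m + real n * \<epsilon> / 3 + no_return_within_prob m + \<epsilon> / 3"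
          by (simp add: algebra_simps)
        moreover have "real n * no_return_within_prob m \<le> real n * no_return_prob + real n * \<epsilon> / 3"
          using mult_left_mono[OF less_imp_le[OF m], of "real n"] by (simp add: algebra_simps)
        moreover have "no_return_within_prob m \<le> 1" unfolding no_return_within_prob_def by simp
        ultimately have "real (card (?P ` {1..n})) \<le> real n * no_return_prob + real n * \<epsilon>"
          using elim by linarith
        then show ?case by (simp add: algebra_simps)
      qed
    qed
  qed
qed

lemma range_ratio_lower_bound:
  "AE \<omega> in M. \<forall>\<epsilon>>0. eventually (\<lambda>n.
     real (card ((\<lambda>j. partial_sum Z j \<omega>) ` {1..n})) \<ge> real n * (no_return_prob - \<epsilon>)) sequentially"
proof -
  have "expectation (\<lambda>\<omega>. 1 - no_return (seq_from Z 0 \<omega>)) = 1 - no_return_prob"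
  proof -
    have "integrable M (\<lambda>\<omega>. no_return (seq_from Z 0 \<omega>))"
      by (rule integrable_bounded[where B=1]) (auto simp: no_return_def)
    then show ?thesis using expectation_no_return by (simp add: prob_space)
  qed
  then have "AE \<omega> in M. \<forall>\<epsilon>>0. eventually (\<lambda>n. (\<Sum>k<n. 1 - no_return (seq_from Z k \<omega>))
      \<le> real n * (1 - no_return_prob + \<epsilon>)) sequentially"
    using ergodic_average_upper_bound[of "\<lambda>s. 1 - no_return s" 1] by (simp add: no_return_def)
  then show ?thesis
  proof eventually_elim
    case (elim \<omega>)
    let ?P = "\<lambda>j. partial_sum Z j \<omega>"
    show ?case
    proof (intro allI impI)
      fix \<epsilon> :: real assume e: "\<epsilon> > 0"
      have "eventually (\<lambda>n. (\<Sum>k<n. 1 - no_return (seq_from Z k \<omega>))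
          \<le> real n * (1 - no_return_prob + \<epsilon> / 2)) sequentially"
        using elim e by simp
      then have "eventually (\<lambda>n. (\<Sum>k<Suc n. 1 - no_return (seq_from Z k \<omega>))
          \<le> real (Suc n) * (1 - no_return_prob + \<epsilon> / 2)) sequentially"
        by (rule eventually_sequentially_Suc[THEN iffD2])
      moreover have "eventually (\<lambda>n. 2 + \<epsilon> \<le> real n * \<epsilon>) sequentially"
        by (rule eventually_le_real_mult[OF e])
      ultimately show "eventually (\<lambda>n. real (card (?P ` {1..n})) \<ge> real n * (no_return_prob - \<epsilon>)) sequentially"
      proof eventually_elim
        case (elim n)
        note card_range_ge_sum_no_return[of n Z \<omega>]
        moreover have "real (Suc n) * (1 - no_return_prob + \<epsilon> / 2)
            = real n - real n * no_return_prob + real n * \<epsilon> / 2 + 1 - no_return_prob + \<epsilon> / 2"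
          by (simp add: algebra_simps)
        moreover have "0 \<le> no_return_prob" unfolding no_return_prob_def by simp
        ultimately have "real n * no_return_prob - real n * \<epsilon> \<le> real (card (?P ` {1..n}))"
          using elim by linarith
        then show ?case by (simp add: algebra_simps)
      qed
    qed
  qed
qed

theorem range_ratio_tendsto:
  "AE \<omega> in M. (\<lambda>n. real (card ((\<lambda>j. partial_sum Z j \<omega>) ` {1..n})) / real n) \<longlonglongrightarrow> no_return_prob"
  using range_ratio_upper_bound range_ratio_lower_bound
proof eventually_elim
  case (elim \<omega>)
  show ?case
  proof (rule tendsto_of_eventually_bounds)
    fix \<epsilon> :: real assume "\<epsilon> > 0"
    with elim(1) have "eventually (\<lambda>n. real (card ((\<lambda>j. partial_sum Z j \<omega>) ` {1..n}))
        \<le> real n * (no_return_prob + \<epsilon>)) sequentially" by blast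
    then show "eventually (\<lambda>n. real (card ((\<lambda>j. partial_sum Z j \<omega>) ` {1..n})) / real n
        \<le> no_return_prob + \<epsilon>) sequentially"
      using eventually_gt_at_top[of 0] by eventually_elim (simp add: pos_divide_le_eq mult.commute)
  next
    fix \<epsilon> :: real assume "\<epsilon> > 0"
    with elim(2) have "eventually (\<lambda>n. real (card ((\<lambda>j. partial_sum Z j \<omega>) ` {1..n}))
        \<ge> real n * (no_return_prob - \<epsilon>)) sequentially" by blast
    then show "eventually (\<lambda>n. real (card ((\<lambda>j. partial_sum Z j \<omega>) ` {1..n})) / real n
        \<ge> no_return_prob - \<epsilon>) sequentially"
      using eventually_gt_at_top[of 0] by eventually_elim (simp add: pos_le_divide_eq mult.commute)
  qed
qed

end

lemma iid_int_process_Suc: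
  assumes M: "prob_space M"
    and X_rv: "\<And>i. i \<ge> 1 \<Longrightarrow> X i \<in> measurable M (count_space UNIV)"
    and X_indep: "prob_space.indep_vars M (\<lambda>_. count_space UNIV) X {1..}"
    and X_ident: "\<And>i. i \<ge> 1 \<Longrightarrow> distr M (count_space UNIV) (X i) = distr M (count_space UNIV) (X 1)"
  shows "iid_int_process M (\<lambda>i. X (Suc i))"
proof -
  interpret prob_space M by (rule M)
  let ?F = "\<lambda>i. {X i -` A \<inter> space M | A. A \<in> sets (count_space (UNIV :: int set))}"
  have X_Suc: "X (Suc i) \<in> measurable M (count_space UNIV)" for i using X_rv by simp
  have indep: "indep_sets ?F {1..}" using X_indep unfolding indep_vars_def2 by blast
  have "indep_sets (\<lambda>i. ?F (Suc i)) UNIV"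
  proof (rule indep_setsI)
    show "?F (Suc i) \<subseteq> events" for i using X_Suc by (auto simp: measurable_sets)
    fix A :: "nat \<Rightarrow> 'a set" and J :: "nat set"
    assume J: "J \<noteq> {}" "finite J" and A: "\<forall>j\<in>J. A j \<in> ?F (Suc j)"
    have "prob (\<Inter>j\<in>Suc ` J. A (j - 1)) = (\<Prod>j\<in>Suc ` J. prob (A (j - 1)))"
      by (rule indep_setsD[OF indep]) (use J A in auto)
    then show "prob (\<Inter>j\<in>J. A j) = (\<Prod>j\<in>J. prob (A j))"
      by (simp add: prod.reindex)
  qed
  then have "indep_vars (\<lambda>_. count_space UNIV) (\<lambda>i. X (Suc i)) UNIV"
    unfolding indep_vars_def2 using X_Suc by simp
  then show ?thesis
    using M X_Suc X_ident[of "Suc _"] by unfold_locales auto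
qed

lemma walk_eq_partial_sum: "walk X m \<omega> = partial_sum (\<lambda>i. X (Suc i)) m \<omega>"
  unfolding walk_def partial_sum_def by (induction m) simp_all

section \<open>Exceedances of the stationary scenery\<close>

lemma (in prob_space) bonferroni_lower_bound:
  assumes "finite B" and A: "\<And>i. A i \<in> events"
  shows "prob (\<Union>i\<in>B. A i) \<ge> (\<Sum>i\<in>B. prob (A i)) - (\<Sum>i\<in>B. \<Sum>j\<in>B - {i}. prob (A i \<inter> A j))"
  using assms(1)
proof (induction B rule: finite_induct)
  case (insert x B)
  let ?U = "\<Union>i\<in>B. A i"
  have U: "?U \<in> events" using A insert.hyps by auto
  have "prob (A x \<union> ?U) = prob (A x) + prob ?U - prob (?U \<inter> A x)"
    using finite_measure_Union'[OF A[of x] U] finite_measure_Diff'[OF U A[of x]] by simp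
  moreover have "prob (?U \<inter> A x) \<le> (\<Sum>j\<in>B. prob (A x \<inter> A j))"
  proof -
    have "?U \<inter> A x = (\<Union>j\<in>B. A x \<inter> A j)" by auto
    moreover have "prob (\<Union>j\<in>B. A x \<inter> A j) \<le> (\<Sum>j\<in>B. prob (A x \<inter> A j))"
      using A insert.hyps by (intro finite_measure_subadditive_finite) auto
    ultimately show ?thesis by simp
  qed
  moreover have "(\<Sum>i\<in>insert x B. \<Sum>j\<in>insert x B - {i}. prob (A i \<inter> A j))
      = (\<Sum>j\<in>B. prob (A x \<inter> A j)) + (\<Sum>i\<in>B. prob (A i \<inter> A x)) + (\<Sum>i\<in>B. \<Sum>j\<in>B - {i}. prob (A i \<inter> A j))"
  proof -
    have "(\<Sum>j\<in>insert x B - {i}. prob (A i \<inter> A j)) = prob (A i \<inter> A x) + (\<Sum>j\<in>B - {i}. prob (A i \<inter> A j))"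
      if "i \<in> B" for i
    proof -
      have "insert x B - {i} = insert x (B - {i})" using that insert.hyps by auto
      then show ?thesis using insert.hyps by simp
    qed
    moreover have "insert x B - {x} = B" using insert.hyps by auto
    ultimately show ?thesis using insert.hyps by (simp add: sum.distrib)
  qed
  moreover have "0 \<le> (\<Sum>i\<in>B. prob (A i \<inter> A x))" by (intro sum_nonneg) simp
  ultimately show ?case using insert.IH insert.hyps by simp
qed simp

locale stationary_scenery = prob_space N for N :: "'b measure" +
  fixes \<xi> :: "int \<Rightarrow> 'b \<Rightarrow> real"
  assumes \<xi>_measurable [measurable]: "\<And>i. \<xi> i \<in> borel_measurable N"
    and stationary: "stationary_field N \<xi>"
begin

lemma prob_all_exceed_shift:
  assumes I: "finite I"
  shows "prob {x\<in>space N. \<forall>i\<in>I. \<xi> (i + h) x > v} = prob {x\<in>space N. \<forall>i\<in>I. \<xi> i x > v}"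
proof -
  let ?P = "PiM I (\<lambda>_. borel :: real measure)"
  let ?S = "PiE I (\<lambda>_. {v<..})"
  have S: "?S \<in> sets ?P" using I by (intro sets_PiM_I_finite) auto
  have pushforward: "prob {x\<in>space N. \<forall>i\<in>I. \<xi> (i + k) x > v}
      = measure (distr N ?P (\<lambda>x. \<lambda>i\<in>I. \<xi> (i + k) x)) ?S" for k
  proof -
    have "(\<lambda>x. \<lambda>i\<in>I. \<xi> (i + k) x) \<in> measurable N ?P" by measurable
    moreover have "(\<lambda>x. \<lambda>i\<in>I. \<xi> (i + k) x) -` ?S \<inter> space N = {x\<in>space N. \<forall>i\<in>I. \<xi> (i + k) x > v}"
      by (auto simp: PiE_iff)
    ultimately show ?thesis using S by (simp add: measure_distr)
  qed
  moreover have "distr N ?P (\<lambda>x. \<lambda>i\<in>I. \<xi> (i + h) x) = distr N ?P (\<lambda>x. \<lambda>i\<in>I. \<xi> i x)"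
    using stationary I unfolding stationary_field_def by blast
  ultimately show ?thesis using pushforward[of 0] by simp
qed

definition exceedance :: "real \<Rightarrow> int \<Rightarrow> 'b set" where
  "exceedance v i = {x\<in>space N. v < \<xi> i x}"

lemma exceedance_sets [measurable]: "exceedance v i \<in> events"
  unfolding exceedance_def by measurable

lemma prob_exceedance: "prob (exceedance v i) = prob (exceedance v 0)"
  using prob_all_exceed_shift[where I="{0}" and h=i and v=v] by (simp add: exceedance_def)

lemma prob_exceedance_pair:
  "prob (exceedance v i \<inter> exceedance v (i + d)) = prob {x\<in>space N. \<xi> 0 x > v \<and> \<xi> d x > v}"
proof -
  have "prob {x\<in>space N. \<forall>j\<in>{0, d}. \<xi> (j + i) x > v} = prob {x\<in>space N. \<forall>j\<in>{0, d}. \<xi> j x > v}"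
    by (rule prob_all_exceed_shift) simp
  moreover have "exceedance v i \<inter> exceedance v (i + d) = {x\<in>space N. \<forall>j\<in>{0, d}. \<xi> (j + i) x > v}"
    by (auto simp: exceedance_def add.commute)
  ultimately show ?thesis by simp
qed

lemma Fjoint_pair:
  "Fjoint N \<xi> {i, j} v = 1 - (prob (exceedance v i) + prob (exceedance v j) - prob (exceedance v i \<inter> exceedance v j))"
proof -
  have "{x \<in> space N. \<forall>k\<in>{i, j}. \<xi> k x \<le> v} = space N - (exceedance v i \<union> exceedance v j)"
    by (auto simp: exceedance_def)
  moreover have "prob (exceedance v i \<union> exceedance v j)
      = prob (exceedance v i) + prob (exceedance v j) - prob (exceedance v i \<inter> exceedance v j)"
    using finite_measure_Union'[of "exceedance v i" "exceedance v j"]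
      finite_measure_Diff'[of "exceedance v j" "exceedance v i"]
    by (simp add: Int_commute)
  ultimately show ?thesis unfolding Fjoint_def using prob_compl by simp
qed

lemma prob_exceedance_pair_le:
  assumes "\<bar>Fjoint N \<xi> {i, j} v - Fjoint N \<xi> {i} v * Fjoint N \<xi> {j} v\<bar> \<le> a"
  shows "prob (exceedance v i \<inter> exceedance v j) \<le> (prob (exceedance v 0))\<^sup>2 + a"
proof -
  let ?p = "prob (exceedance v 0)"
  have "Fjoint N \<xi> {i} v = 1 - ?p" for i
    using Fjoint_pair[of i i v] prob_exceedance[of v i] by simp
  then have "Fjoint N \<xi> {i, j} v \<le> (1 - ?p) * (1 - ?p) + a"
    using assms by (simp add: abs_le_iff)
  then have "1 - (?p + ?p - prob (exceedance v i \<inter> exceedance v j)) \<le> (1 - ?p) * (1 - ?p) + a"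
    unfolding Fjoint_pair prob_exceedance[of v i] prob_exceedance[of v j] .
  then show ?thesis by (simp add: power2_eq_square algebra_simps)
qed

lemma sum_prob_exceedance_neighbours:
  "(\<Sum>j\<in>{i - int L..i + int L} - {i}. prob (exceedance v i \<inter> exceedance v j))
     = 2 * (\<Sum>d\<in>{1..L}. prob {x\<in>space N. \<xi> 0 x > v \<and> \<xi> (int d) x > v})"
proof -
  have up: "(\<lambda>d::nat. i + int d) ` {1..L} = {i + 1..i + int L}"
  proof (intro equalityI subsetI)
    fix j assume "j \<in> {i + 1..i + int L}"
    then show "j \<in> (\<lambda>d. i + int d) ` {1..L}" by (intro image_eqI[of _ _ "nat (j - i)"]) auto
  qed auto
  have down: "(\<lambda>d::nat. i - int d) ` {1..L} = {i - int L..i - 1}"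
  proof (intro equalityI subsetI)
    fix j assume "j \<in> {i - int L..i - 1}"
    then show "j \<in> (\<lambda>d. i - int d) ` {1..L}" by (intro image_eqI[of _ _ "nat (i - j)"]) auto
  qed auto
  have "{i - int L..i + int L} - {i} = {i + 1..i + int L} \<union> {i - int L..i - 1}" by auto
  then have "(\<Sum>j\<in>{i - int L..i + int L} - {i}. prob (exceedance v i \<inter> exceedance v j))
      = (\<Sum>j\<in>{i + 1..i + int L}. prob (exceedance v i \<inter> exceedance v j))
        + (\<Sum>j\<in>{i - int L..i - 1}. prob (exceedance v i \<inter> exceedance v j))"
    by (simp add: sum.union_disjoint)
  also have "\<dots> = (\<Sum>d\<in>{1..L}. prob (exceedance v i \<inter> exceedance v (i + int d)))
        + (\<Sum>d\<in>{1..L}. prob (exceedance v (i - int d) \<inter> exceedance v i))"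
    unfolding up[symmetric] down[symmetric]
    by (simp add: sum.reindex inj_on_def Int_commute)
  also have "\<dots> = 2 * (\<Sum>d\<in>{1..L}. prob {x\<in>space N. \<xi> 0 x > v \<and> \<xi> (int d) x > v})"
  proof -
    have "prob (exceedance v (i - d) \<inter> exceedance v i) = prob {x\<in>space N. \<xi> 0 x > v \<and> \<xi> d x > v}" for d
      using prob_exceedance_pair[of v "i - d" d] by simp
    then show ?thesis by (simp add: prob_exceedance_pair)
  qed
  finally show ?thesis .
qed


definition neighbour_exceedance_sum :: "nat \<Rightarrow> real \<Rightarrow> real" where
  "neighbour_exceedance_sum L v = (\<Sum>d\<in>{1..L}. prob {x\<in>space N. \<xi> 0 x > v \<and> \<xi> (int d) x > v})"

lemma neighbour_exceedance_sum_nonneg: "0 \<le> neighbour_exceedance_sum L v"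
  unfolding neighbour_exceedance_sum_def by (simp add: sum_nonneg)

lemma prob_all_le_eq:
  assumes "finite B"
  shows "prob {x\<in>space N. \<forall>i\<in>B. \<xi> i x \<le> v} = 1 - prob (\<Union>i\<in>B. exceedance v i)"
proof -
  have "{x\<in>space N. \<forall>i\<in>B. \<xi> i x \<le> v} = space N - (\<Union>i\<in>B. exceedance v i)"
    by (auto simp: exceedance_def)
  moreover have "(\<Union>i\<in>B. exceedance v i) \<in> events" using assms by auto
  ultimately show ?thesis by (simp add: prob_compl)
qed

lemma sum_prob_exceedance: "(\<Sum>i\<in>B. prob (exceedance v i)) = real (card B) * prob (exceedance v 0)"
proof -
  have "(\<Sum>i\<in>B. prob (exceedance v i)) = (\<Sum>i\<in>B. prob (exceedance v 0))"
    by (rule sum.cong[OF refl prob_exceedance])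
  then show ?thesis by simp
qed

lemma prob_all_le_lower_bound:
  assumes "finite B"
  shows "1 - real (card B) * prob (exceedance v 0) \<le> prob {x\<in>space N. \<forall>i\<in>B. \<xi> i x \<le> v}"
proof -
  have "prob (\<Union>i\<in>B. exceedance v i) \<le> (\<Sum>i\<in>B. prob (exceedance v i))"
    using assms by (intro finite_measure_subadditive_finite) auto
  then show ?thesis unfolding prob_all_le_eq[OF assms] sum_prob_exceedance by simp
qed

lemma sum_prob_exceedance_pairs_le:
  assumes B: "finite B" and lL: "l \<le> L"
    and mixing: "\<And>i j. i < j \<Longrightarrow> j - i \<ge> int l \<Longrightarrow>
         \<bar>Fjoint N \<xi> {i, j} v - Fjoint N \<xi> {i} v * Fjoint N \<xi> {j} v\<bar> \<le> a"
  shows "(\<Sum>j\<in>B - {i}. prob (exceedance v i \<inter> exceedance v j))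
    \<le> 2 * neighbour_exceedance_sum L v + real (card B) * ((prob (exceedance v 0))\<^sup>2 + a)"
proof -
  let ?f = "\<lambda>j. prob (exceedance v i \<inter> exceedance v j)"
  let ?c = "(prob (exceedance v 0))\<^sup>2 + a"
  let ?near = "{i - int L..i + int L} - {i}"
  have "0 \<le> a" using mixing[of 0 "int l + 1"] by simp
  then have c: "0 \<le> ?c" by simp
  have far: "?f j \<le> ?c" if "j \<notin> ?near" "j \<noteq> i" for j
  proof (cases "i < j")
    case True
    then show ?thesis using that lL by (intro prob_exceedance_pair_le mixing) auto
  next
    case False
    then have "prob (exceedance v j \<inter> exceedance v i) \<le> ?c"
      using that lL by (intro prob_exceedance_pair_le mixing) auto
    then show ?thesis by (simp add: Int_commute)
  qed
  have "(\<Sum>j\<in>B - {i}. ?f j) = (\<Sum>j\<in>(B - {i}) \<inter> ?near. ?f j) + (\<Sum>j\<in>B - {i} - ?near. ?f j)"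
    using B by (simp add: sum.Int_Diff)
  also have "(\<Sum>j\<in>(B - {i}) \<inter> ?near. ?f j) \<le> (\<Sum>j\<in>?near. ?f j)"
    by (intro sum_mono2) auto
  also have "\<dots> = 2 * neighbour_exceedance_sum L v"
    unfolding neighbour_exceedance_sum_def by (rule sum_prob_exceedance_neighbours)
  also have "(\<Sum>j\<in>B - {i} - ?near. ?f j) \<le> (\<Sum>j\<in>B - {i} - ?near. ?c)"
    using far by (intro sum_mono) auto
  also have "\<dots> \<le> real (card B) * ?c"
    using B c by (auto intro!: mult_right_mono card_mono)
  finally show ?thesis by simp
qed

lemma prob_all_le_upper_bound:
  assumes B: "finite B" and lL: "l \<le> L"
    and mixing: "\<And>i j. i < j \<Longrightarrow> j - i \<ge> int l \<Longrightarrow>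
         \<bar>Fjoint N \<xi> {i, j} v - Fjoint N \<xi> {i} v * Fjoint N \<xi> {j} v\<bar> \<le> a"
  shows "prob {x\<in>space N. \<forall>i\<in>B. \<xi> i x \<le> v} \<le> 1 - real (card B) * prob (exceedance v 0)
    + real (card B) * (2 * neighbour_exceedance_sum L v) + (real (card B))\<^sup>2 * ((prob (exceedance v 0))\<^sup>2 + a)"
proof -
  have "(\<Sum>i\<in>B. \<Sum>j\<in>B - {i}. prob (exceedance v i \<inter> exceedance v j))
      \<le> (\<Sum>i\<in>B. 2 * neighbour_exceedance_sum L v + real (card B) * ((prob (exceedance v 0))\<^sup>2 + a))"
    by (intro sum_mono sum_prob_exceedance_pairs_le[OF B lL mixing]) auto
  moreover have "real (card B) * prob (exceedance v 0)
      - (\<Sum>i\<in>B. \<Sum>j\<in>B - {i}. prob (exceedance v i \<inter> exceedance v j)) \<le> prob (\<Union>i\<in>B. exceedance v i)"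
    using bonferroni_lower_bound[OF B, of "exceedance v"] unfolding sum_prob_exceedance by simp
  ultimately show ?thesis
    unfolding prob_all_le_eq[OF B] by (simp add: algebra_simps power2_eq_square)
qed

end

section \<open>Products over blocks\<close>

lemma prod_ge_exp_neg_sum:
  fixes x y :: "'i \<Rightarrow> real"
  assumes "finite J" and m: "m \<le> 1 / 2"
    and xy: "\<And>j. j \<in> J \<Longrightarrow> 0 \<le> x j \<and> x j \<le> m \<and> 1 - x j \<le> y j"
  shows "exp (- (\<Sum>j\<in>J. x j) - 2 * m * (\<Sum>j\<in>J. x j)) \<le> (\<Prod>j\<in>J. y j)"
proof -
  have "(\<Sum>j\<in>J. 2 * (x j)\<^sup>2) \<le> (\<Sum>j\<in>J. 2 * m * x j)"
    using xy by (intro sum_mono) (simp add: power2_eq_square mult_right_mono)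
  then have "exp (- (\<Sum>j\<in>J. x j) - 2 * m * (\<Sum>j\<in>J. x j)) \<le> exp (\<Sum>j\<in>J. - x j - 2 * (x j)\<^sup>2)"
    by (simp add: sum_subtractf sum_distrib_left sum_negf)
  also have "\<dots> = (\<Prod>j\<in>J. exp (- x j - 2 * (x j)\<^sup>2))"
    using \<open>finite J\<close> by (simp add: exp_sum)
  also have "\<dots> \<le> (\<Prod>j\<in>J. y j)"
  proof (rule prod_mono)
    fix j assume j: "j \<in> J"
    then have x: "0 \<le> x j" "x j \<le> 1 / 2" using xy m by force+
    have "exp (- x j - 2 * (x j)\<^sup>2) \<le> exp (ln (1 - x j))"
      using ln_one_minus_pos_lower_bound[OF x] by simp
    also have "\<dots> = 1 - x j" using x by simp
    finally show "0 \<le> exp (- x j - 2 * (x j)\<^sup>2) \<and> exp (- x j - 2 * (x j)\<^sup>2) \<le> y j"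
      using xy[OF j] by simp
  qed
  finally show ?thesis .
qed

lemma prod_le_exp_neg_sum:
  fixes x y e :: "'i \<Rightarrow> real"
  assumes "finite J" and "\<And>j. j \<in> J \<Longrightarrow> 0 \<le> y j \<and> y j \<le> 1 - x j + e j"
  shows "(\<Prod>j\<in>J. y j) \<le> exp (- (\<Sum>j\<in>J. x j) + (\<Sum>j\<in>J. e j))"
proof -
  have "(\<Prod>j\<in>J. y j) \<le> (\<Prod>j\<in>J. exp (- x j + e j))"
  proof (rule prod_mono)
    fix j assume "j \<in> J"
    then have "0 \<le> y j" "y j \<le> 1 - x j + e j" using assms(2) by auto
    moreover have "1 + (- x j + e j) \<le> exp (- x j + e j)" by (rule exp_ge_add_one_self)
    ultimately show "0 \<le> y j \<and> y j \<le> exp (- x j + e j)" by (intro conjI) linarith+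
  qed
  also have "\<dots> = exp (- (\<Sum>j\<in>J. x j) + (\<Sum>j\<in>J. e j))"
    using assms(1) by (simp add: exp_sum[symmetric] sum_subtractf)
  finally show ?thesis .
qed

lemma prod_tendsto_exp:
  fixes x y e :: "nat \<Rightarrow> nat \<Rightarrow> real" and J :: "nat \<Rightarrow> nat set"
  assumes fin: "\<And>n. finite (J n)"
    and bounds: "eventually (\<lambda>n. \<forall>j\<in>J n. 0 \<le> x n j \<and> x n j \<le> m n \<and> 1 - x n j \<le> y n j
               \<and> y n j \<le> 1 - x n j + e n j \<and> 0 \<le> y n j) sequentially"
    and errors: "eventually (\<lambda>n. (\<Sum>j\<in>J n. e n j) \<le> E n) sequentially"
    and S: "(\<lambda>n. \<Sum>j\<in>J n. x n j) \<longlonglongrightarrow> L"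
    and m: "m \<longlonglongrightarrow> 0" and E: "E \<longlonglongrightarrow> 0"
  shows "(\<lambda>n. \<Prod>j\<in>J n. y n j) \<longlonglongrightarrow> exp (- L)"
proof (rule tendsto_sandwich)
  have "eventually (\<lambda>n. m n \<le> 1 / 2) sequentially"
    using order_tendstoD(2)[OF m, of "1 / 2"] by (auto elim: eventually_mono)
  with bounds show "eventually (\<lambda>n. exp (- (\<Sum>j\<in>J n. x n j) - 2 * m n * (\<Sum>j\<in>J n. x n j))
      \<le> (\<Prod>j\<in>J n. y n j)) sequentially"
    by eventually_elim (simp add: prod_ge_exp_neg_sum fin)
  from bounds errors show "eventually (\<lambda>n. (\<Prod>j\<in>J n. y n j)
      \<le> exp (- (\<Sum>j\<in>J n. x n j) + E n)) sequentially"
  proof eventually_elim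
    case (elim n)
    then have "(\<Prod>j\<in>J n. y n j) \<le> exp (- (\<Sum>j\<in>J n. x n j) + (\<Sum>j\<in>J n. e n j))"
      by (intro prod_le_exp_neg_sum fin) auto
    also have "\<dots> \<le> exp (- (\<Sum>j\<in>J n. x n j) + E n)" using elim(2) by simp
    finally show ?case .
  qed
  show "(\<lambda>n. exp (- (\<Sum>j\<in>J n. x n j) - 2 * m n * (\<Sum>j\<in>J n. x n j))) \<longlonglongrightarrow> exp (- L)"
    using tendsto_exp[OF tendsto_diff[OF tendsto_minus[OF S] tendsto_mult[OF tendsto_mult[OF tendsto_const m] S]]]
    by simp
  show "(\<lambda>n. exp (- (\<Sum>j\<in>J n. x n j) + E n)) \<longlonglongrightarrow> exp (- L)"
    using tendsto_exp[OF tendsto_add[OF tendsto_minus[OF S] E]] by simp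
qed

definition sorted_blocks :: "nat \<Rightarrow> int set \<Rightarrow> nat \<Rightarrow> int set" where
  "sorted_blocks r T j = set (take r (drop ((j - 1) * r) (sorted_list_of_set T)))"

lemma sum_min_block_lengths: "(\<Sum>j<K. min r (len - j * r)) = min len (K * r)" for len r :: nat
proof (induction K)
  case (Suc K)
  then show ?case
    by (cases "len \<le> K * r") (auto simp: min_def)
qed simp

lemma sum_card_sorted_blocks:
  assumes "finite T" "r > 0"
  shows "(\<Sum>j\<in>{1..card T div r + 1}. card (sorted_blocks r T j)) = card T"
proof -
  let ?K = "card T div r + 1"
  have "card (sorted_blocks r T (Suc j)) = min r (card T - j * r)" for j
    using assms(1) by (simp add: sorted_blocks_def distinct_card)
  moreover have "{1..?K} = Suc ` {..<?K}" by (simp add: image_Suc_lessThan)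
  ultimately have "(\<Sum>j\<in>{1..?K}. card (sorted_blocks r T j)) = (\<Sum>j<?K. min r (card T - j * r))"
    by (simp add: sum.reindex)
  also have "\<dots> = min (card T) (?K * r)" by (rule sum_min_block_lengths)
  also have "\<dots> = card T"
  proof -
    have "card T div r * r + card T mod r = card T" by (rule div_mult_mod_eq)
    moreover have "card T mod r < r" using assms(2) by simp
    moreover have "?K * r = card T div r * r + r" by simp
    ultimately show ?thesis by linarith
  qed
  finally show ?thesis .
qed

lemma card_sorted_blocks_le: "card (sorted_blocks r T j) \<le> r"
  unfolding sorted_blocks_def by (rule order_trans[OF card_length]) simp

lemma block_len_le:
  assumes "k n \<ge> 2"
  shows "real (block_len k n) \<le> 2 * real n / real (k n) + 1"
proof -
  have "real (n div (k n - 1)) \<le> real n / real (k n - 1)" by (rule of_nat_div_le_of_nat)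
  also have "\<dots> \<le> 2 * real n / real (k n)"
    using assms mult_left_mono[of 2 "real (k n)" "real n"] by (simp add: field_simps of_nat_diff)
  finally show ?thesis by (simp add: block_len_def)
qed

lemma blockmax_le_ereal_iff: "blockmax \<xi> B x \<le> ereal v \<longleftrightarrow> (\<forall>i\<in>B. \<xi> i x \<le> v)"
  by (simp add: blockmax_def SUP_le_iff)

lemma sum_block_errors_le:
  fixes c :: "'j \<Rightarrow> real" and D w R n :: real
  assumes c: "\<And>j. j \<in> J \<Longrightarrow> 0 \<le> c j \<and> c j \<le> R" and total: "(\<Sum>j\<in>J. c j) \<le> n"
    and "0 \<le> D" "0 \<le> w" "0 \<le> R"
  shows "(\<Sum>j\<in>J. c j * (2 * D) + (c j)\<^sup>2 * w) \<le> n * (2 * D) + n * R * w"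
proof -
  have "(\<Sum>j\<in>J. c j * (2 * D) + (c j)\<^sup>2 * w) \<le> (\<Sum>j\<in>J. c j * (2 * D + R * w))"
  proof (rule sum_mono)
    fix j assume "j \<in> J"
    then have "(c j)\<^sup>2 * w \<le> c j * R * w"
      using c \<open>0 \<le> w\<close> by (intro mult_right_mono) (auto simp: power2_eq_square mult_left_mono)
    then show "c j * (2 * D) + (c j)\<^sup>2 * w \<le> c j * (2 * D + R * w)" by (simp add: algebra_simps)
  qed
  also have "\<dots> = (\<Sum>j\<in>J. c j) * (2 * D + R * w)" by (simp add: sum_distrib_right)
  also have "\<dots> \<le> n * (2 * D + R * w)"
    using total assms by (intro mult_right_mono) auto
  finally show ?thesis by (simp add: algebra_simps)
qed

lemma block_errors_le:
  fixes c :: "'j \<Rightarrow> real" and n K L :: nat and D p a :: real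
  assumes c: "\<And>j. j \<in> J \<Longrightarrow> 0 \<le> c j \<and> c j \<le> 2 * real n / real K + 1"
    and total: "(\<Sum>j\<in>J. c j) \<le> real n" and "0 \<le> D" "0 \<le> a" "0 < K" "0 < n" "0 < L"
  shows "(\<Sum>j\<in>J. c j * (2 * D) + (c j)\<^sup>2 * (p\<^sup>2 + a))
    \<le> 2 * (real n * D) + 2 * (real n * p)\<^sup>2 * (1 / real K) + (real n * p)\<^sup>2 * (1 / real n)
      + 2 * ((real n)\<^sup>2 / real K * a) + ((real n)\<^sup>2 / real K * a) * (real (K * L) / real n)"
proof -
  have "(\<Sum>j\<in>J. c j * (2 * D) + (c j)\<^sup>2 * (p\<^sup>2 + a))
      \<le> real n * (2 * D) + real n * (2 * real n / real K + 1) * (p\<^sup>2 + a)"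
    by (rule sum_block_errors_le) (use assms in \<open>auto simp: add_nonneg_nonneg\<close>)
  also have "\<dots> = 2 * (real n * D) + 2 * (real n * p)\<^sup>2 * (1 / real K) + (real n * p)\<^sup>2 * (1 / real n)
      + 2 * ((real n)\<^sup>2 / real K * a) + real n * a"
    using assms by (simp add: field_simps power2_eq_square)
  also have "real n * a \<le> real n * a * real L"
    using mult_left_mono[of 1 "real L" "real n * a"] assms by simp
  also have "\<dots> = ((real n)\<^sup>2 / real K * a) * (real (K * L) / real n)"
    using assms by (simp add: field_simps power2_eq_square)
  finally show ?thesis by simp
qed

lemma condition_D_pair:
  assumes "condition_D N \<xi> u \<alpha> l" "i < j" "j - i \<ge> int m"
  shows "\<bar>Fjoint N \<xi> {i, j} (u n) - Fjoint N \<xi> {i} (u n) * Fjoint N \<xi> {j} (u n)\<bar> \<le> \<alpha> n m"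
  using assms unfolding condition_D_def
  by (metis (no_types, lifting) Max_singleton Min_singleton finite.emptyI finite.insertI
      insert_is_Un insert_not_empty)

lemma eventually_gap_le_block_spacing:
  assumes "condition_D' N \<xi> u \<alpha> l k"
  shows "eventually (\<lambda>n. 2 \<le> k n \<and> l n \<le> n div k n) sequentially"
proof -
  have "eventually (\<lambda>n. 2 \<le> k n) sequentially"
    using assms by (simp add: condition_D'_def filterlim_at_top)
  moreover have "eventually (\<lambda>n. real (k n * l n) / real n < 1) sequentially"
    using assms unfolding condition_D'_def by (auto intro: order_tendstoD(2))
  ultimately show ?thesis
    using eventually_gt_at_top[of 0]
  proof eventually_elim
    case (elim n)
    then have "l n * k n < n" by (simp add: divide_less_eq mult.commute del: of_nat_mult)
    with elim show ?case by (simp add: less_eq_div_iff_mult_less_eq)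
  qed
qed

context stationary_scenery
begin

lemma prob_sorted_block_bounds:
  fixes T :: "int set" and j :: nat
  assumes k: "2 \<le> k n" and l: "l \<le> n div k n"
    and mixing: "\<And>i j. i < j \<Longrightarrow> j - i \<ge> int l \<Longrightarrow>
         \<bar>Fjoint N \<xi> {i, j} v - Fjoint N \<xi> {i} v * Fjoint N \<xi> {j} v\<bar> \<le> a"
  defines "c \<equiv> real (card (sorted_blocks (block_len k n) T j))" and "p \<equiv> prob (exceedance v 0)"
    and "P \<equiv> prob {x\<in>space N. \<forall>i\<in>sorted_blocks (block_len k n) T j. \<xi> i x \<le> v}"
  shows "0 \<le> c * p \<and> c * p \<le> (2 * real n / real (k n) + 1) * p \<and> 1 - c * p \<le> P
    \<and> P \<le> 1 - c * p + (c * (2 * neighbour_exceedance_sum (n div k n) v) + c\<^sup>2 * (p\<^sup>2 + a)) \<and> 0 \<le> P"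
proof -
  have fin: "finite (sorted_blocks (block_len k n) T j)" unfolding sorted_blocks_def by simp
  have "c \<le> 2 * real n / real (k n) + 1"
    using card_sorted_blocks_le block_len_le[of k n, OF k] unfolding c_def by (meson of_nat_le_iff order_trans)
  then have "c * p \<le> (2 * real n / real (k n) + 1) * p"
    unfolding p_def by (intro mult_right_mono) auto
  moreover have "1 - c * p \<le> P"
    using prob_all_le_lower_bound[OF fin] unfolding c_def p_def P_def by simp
  moreover have "P \<le> 1 - c * p + (c * (2 * neighbour_exceedance_sum (n div k n) v) + c\<^sup>2 * (p\<^sup>2 + a))"
    using prob_all_le_upper_bound[OF fin l mixing] unfolding c_def p_def P_def by simp
  ultimately show ?thesis unfolding c_def p_def P_def by simp
qed

lemma block_error_terms_tendsto_0:
  fixes p :: "nat \<Rightarrow> real"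
  assumes D': "condition_D' N \<xi> u \<alpha> l k" and np: "(\<lambda>n. real n * p n) \<longlonglongrightarrow> \<tau>"
  shows "(\<lambda>n. 2 * (real n * p n) * (1 / real (k n)) + (real n * p n) * (1 / real n)) \<longlonglongrightarrow> 0"
    and "(\<lambda>n. 2 * (real n * neighbour_exceedance_sum (n div k n) (u n))
      + 2 * (real n * p n)\<^sup>2 * (1 / real (k n)) + (real n * p n)\<^sup>2 * (1 / real n)
      + 2 * ((real n)\<^sup>2 / real (k n) * \<alpha> n (l n))
      + ((real n)\<^sup>2 / real (k n) * \<alpha> n (l n)) * (real (k n * l n) / real n)) \<longlonglongrightarrow> 0"
proof -
  have "filterlim (\<lambda>n. real (k n)) at_top sequentially"
    using D' unfolding condition_D'_def by (blast intro: filterlim_compose[OF filterlim_real_sequentially])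
  then have inv_k: "(\<lambda>n. 1 / real (k n)) \<longlonglongrightarrow> 0"
    using tendsto_inverse_0_at_top by (simp add: inverse_eq_divide)
  show "(\<lambda>n. 2 * (real n * p n) * (1 / real (k n)) + (real n * p n) * (1 / real n)) \<longlonglongrightarrow> 0"
    using tendsto_add[OF tendsto_mult[OF tendsto_mult[OF tendsto_const np] inv_k]
        tendsto_mult[OF np lim_1_over_n]] by simp
  have "(\<lambda>n. (real n)\<^sup>2 / real (k n) * \<alpha> n (l n)) \<longlonglongrightarrow> 0"
    "(\<lambda>n. real (k n * l n) / real n) \<longlonglongrightarrow> 0"
    "(\<lambda>n. real n * neighbour_exceedance_sum (n div k n) (u n)) \<longlonglongrightarrow> 0"
    using D' unfolding condition_D'_def neighbour_exceedance_sum_def by auto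
  then have "(\<lambda>n. 2 * (real n * neighbour_exceedance_sum (n div k n) (u n))
      + 2 * (real n * p n)\<^sup>2 * (1 / real (k n)) + (real n * p n)\<^sup>2 * (1 / real n)
      + 2 * ((real n)\<^sup>2 / real (k n) * \<alpha> n (l n))
      + ((real n)\<^sup>2 / real (k n) * \<alpha> n (l n)) * (real (k n * l n) / real n))
      \<longlonglongrightarrow> 2 * 0 + 2 * \<tau>\<^sup>2 * 0 + \<tau>\<^sup>2 * 0 + 2 * 0 + 0 * 0"
    by (intro tendsto_intros np inv_k lim_1_over_n)
  then show "(\<lambda>n. 2 * (real n * neighbour_exceedance_sum (n div k n) (u n))
      + 2 * (real n * p n)\<^sup>2 * (1 / real (k n)) + (real n * p n)\<^sup>2 * (1 / real n)
      + 2 * ((real n)\<^sup>2 / real (k n) * \<alpha> n (l n))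
      + ((real n)\<^sup>2 / real (k n) * \<alpha> n (l n)) * (real (k n * l n) / real n)) \<longlonglongrightarrow> 0"
    by simp
qed

lemma prod_sorted_blocks_tendsto:
  fixes T :: "nat \<Rightarrow> int set" and q :: real
  assumes finite_T: "\<And>n. finite (T n)" and card_T: "\<And>n. card (T n) \<le> n"
    and ratio: "(\<lambda>n. real (card (T n)) / real n) \<longlonglongrightarrow> q"
    and tail: "(\<lambda>n. real n * prob {x\<in>space N. \<xi> 0 x > u n}) \<longlonglongrightarrow> \<tau>"
    and D: "condition_D N \<xi> u \<alpha> l" and D': "condition_D' N \<xi> u \<alpha> l k"
  shows "(\<lambda>n. \<Prod>j\<in>{1..card (T n) div block_len k n + 1}.
       prob {x\<in>space N. blockmax \<xi> (sorted_blocks (block_len k n) (T n) j) x \<le> ereal (u n)})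
     \<longlonglongrightarrow> exp (- \<tau> * q)"
proof -
  define J where "J n = {1..card (T n) div block_len k n + 1}" for n
  define c where "c n j = real (card (sorted_blocks (block_len k n) (T n) j))" for n j
  define p where "p n = prob (exceedance (u n) 0)" for n
  define Ds where "Ds n = neighbour_exceedance_sum (n div k n) (u n)" for n
  define a where "a n = \<alpha> n (l n)" for n
  have mixing: "\<bar>Fjoint N \<xi> {i, j} (u n) - Fjoint N \<xi> {i} (u n) * Fjoint N \<xi> {j} (u n)\<bar> \<le> a n"
    if "i < j" "j - i \<ge> int (l n)" for n i j
    unfolding a_def using condition_D_pair[OF D that] .
  have a_nonneg: "0 \<le> a n" for n using mixing[of 0 "int (l n) + 1" n] by simp
  have np: "(\<lambda>n. real n * p n) \<longlonglongrightarrow> \<tau>"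
    using tail unfolding p_def exceedance_def by simp
  have sum_c: "(\<Sum>j\<in>J n. c n j) = real (card (T n))" for n
    unfolding c_def J_def using sum_card_sorted_blocks[OF finite_T, of "block_len k n" n]
    by (simp add: block_len_def flip: of_nat_sum)
  define m where "m n = 2 * (real n * p n) * (1 / real (k n)) + (real n * p n) * (1 / real n)" for n
  define E where "E n = 2 * (real n * Ds n) + 2 * (real n * p n)\<^sup>2 * (1 / real (k n))
      + (real n * p n)\<^sup>2 * (1 / real n) + 2 * ((real n)\<^sup>2 / real (k n) * a n)
      + ((real n)\<^sup>2 / real (k n) * a n) * (real (k n * l n) / real n)" for n
  have "(\<lambda>n. \<Prod>j\<in>J n. prob {x\<in>space N. \<forall>i\<in>sorted_blocks (block_len k n) (T n) j. \<xi> i x \<le> u n})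
      \<longlonglongrightarrow> exp (- (q * \<tau>))"
  proof (rule prod_tendsto_exp[where x="\<lambda>n j. c n j * p n" and m=m and E=E
        and e="\<lambda>n j. c n j * (2 * Ds n) + (c n j)\<^sup>2 * ((p n)\<^sup>2 + a n)"])
    show "(\<lambda>n. \<Sum>j\<in>J n. c n j * p n) \<longlonglongrightarrow> q * \<tau>"
    proof (rule Lim_transform_eventually[OF tendsto_mult[OF ratio np]])
      show "eventually (\<lambda>n. real (card (T n)) / real n * (real n * p n) = (\<Sum>j\<in>J n. c n j * p n)) sequentially"
        using eventually_gt_at_top[of 0] by eventually_elim (simp add: sum_c sum_distrib_right[symmetric])
    qed
    show "m \<longlonglongrightarrow> 0" "E \<longlonglongrightarrow> 0"
      unfolding m_def[abs_def] E_def[abs_def] Ds_def a_def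
      using block_error_terms_tendsto_0[OF D' np] by simp_all
    show "eventually (\<lambda>n. \<forall>j\<in>J n. 0 \<le> c n j * p n \<and> c n j * p n \<le> m n
        \<and> 1 - c n j * p n \<le> prob {x\<in>space N. \<forall>i\<in>sorted_blocks (block_len k n) (T n) j. \<xi> i x \<le> u n}
        \<and> prob {x\<in>space N. \<forall>i\<in>sorted_blocks (block_len k n) (T n) j. \<xi> i x \<le> u n}
            \<le> 1 - c n j * p n + (c n j * (2 * Ds n) + (c n j)\<^sup>2 * ((p n)\<^sup>2 + a n))
        \<and> 0 \<le> prob {x\<in>space N. \<forall>i\<in>sorted_blocks (block_len k n) (T n) j. \<xi> i x \<le> u n}) sequentially"
      using eventually_gap_le_block_spacing[OF D'] eventually_gt_at_top[of 0]
    proof eventually_elim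
      case (elim n)
      then have "m n = (2 * real n / real (k n) + 1) * p n" unfolding m_def by (simp add: field_simps)
      with elim show ?case
        using prob_sorted_block_bounds[of k n "l n" "u n" "a n"] mixing
        unfolding c_def p_def Ds_def by simp
    qed
    show "eventually (\<lambda>n. (\<Sum>j\<in>J n. c n j * (2 * Ds n) + (c n j)\<^sup>2 * ((p n)\<^sup>2 + a n)) \<le> E n) sequentially"
      using eventually_gap_le_block_spacing[OF D'] eventually_gt_at_top[of 0]
    proof eventually_elim
      case (elim n)
      have "l n > 0" using D unfolding condition_D_def by blast
      moreover have "c n j \<le> 2 * real n / real (k n) + 1" for j
        using card_sorted_blocks_le block_len_le elim unfolding c_def by (meson of_nat_le_iff order_trans)
      ultimately show ?case
        unfolding E_def using card_T[of n] a_nonneg elim sum_c neighbour_exceedance_sum_nonneg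
        by (intro block_errors_le) (auto simp: c_def Ds_def)
    qed
  qed (simp add: J_def)
  then show ?thesis
    unfolding J_def by (simp add: blockmax_le_ereal_iff mult.commute)
qed

end

theorem lemma2:
  fixes M :: "'a measure" and X :: "nat \<Rightarrow> 'a \<Rightarrow> int" and a :: real
    and N :: "'b measure" and \<xi> :: "int \<Rightarrow> 'b \<Rightarrow> real"
    and u :: "nat \<Rightarrow> real" and \<tau> :: real
    and \<alpha> :: "nat \<Rightarrow> nat \<Rightarrow> real" and l k :: "nat \<Rightarrow> nat"
  assumes M: "prob_space M"
    and X_rv: "\<And>i. i \<ge> 1 \<Longrightarrow> X i \<in> measurable M (count_space UNIV)"
    and X_indep: "prob_space.indep_vars M (\<lambda>_. count_space UNIV) X {1..}"
    and X_ident: "\<And>i. i \<ge> 1 \<Longrightarrow> distr M (count_space UNIV) (X i) = distr M (count_space UNIV) (X 1)"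
    and a: "0 < a" "a < 1"
    and attr: "centered_stable_attraction M X a"
    and N: "prob_space N"
    and \<xi>_rv: "\<And>i. \<xi> i \<in> borel_measurable N"
    and stat: "stationary_field N \<xi>"
    and \<tau>: "\<tau> \<ge> 0"
    and tail: "(\<lambda>n. real n * measure N {x \<in> space N. \<xi> 0 x > u n}) \<longlonglongrightarrow> \<tau>"
    and D: "condition_D N \<xi> u \<alpha> l"
    and D': "condition_D' N \<xi> u \<alpha> l k"
  shows "AE \<omega> in M.
    (\<lambda>n. \<Prod>j\<in>{1..num_blocks X k n \<omega>}.
        measure N {x \<in> space N. blockmax \<xi> (block X k n \<omega> j) x \<le> ereal (u n)})
    \<longlonglongrightarrow> exp (- \<tau> * measure M {\<omega> \<in> space M. \<forall>m\<ge>1. walk X m \<omega> \<noteq> 0})"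
proof -
  interpret Z: iid_int_process M "\<lambda>i. X (Suc i)"
    by (rule iid_int_process_Suc[OF M X_rv X_indep X_ident])
  interpret S: stationary_scenery N \<xi>
    by (intro stationary_scenery.intro stationary_scenery_axioms.intro N \<xi>_rv stat)
  have q: "Z.no_return_prob = measure M {\<omega> \<in> space M. \<forall>m\<ge>1. walk X m \<omega> \<noteq> 0}"
    unfolding Z.no_return_prob_def walk_eq_partial_sum ..
  show ?thesis
    using Z.range_ratio_tendsto
  proof eventually_elim
    case (elim \<omega>)
    have range: "walk_range X n \<omega> = (\<lambda>j. partial_sum (\<lambda>i. X (Suc i)) j \<omega>) ` {1..n}" for n
      unfolding walk_range_def walk_eq_partial_sum ..
    have "card (walk_range X n \<omega>) \<le> n" for n
      unfolding walk_range_def using card_image_le[of "{1..n}" "\<lambda>j. walk X j \<omega>"] by simp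
    from S.prod_sorted_blocks_tendsto[OF _ this _ tail D D'] elim
    show ?case
      unfolding q range num_blocks_def block_def sorted_blocks_def by simp
  qed
qed

end
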